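(* Let $0<\alpha\le 2$, $j\in\mathbb{R}\setminus\{0\}$ and $V\in C^2(\mathbb{T})$. Let $$G(x)=p_0+\sum_{k=1}^{n}p_k\cos(2\pi kx)+\sum_{k=1}^{n}q_k\sin(2\pi kx)$$ for some $n\in\mathbb{N}$ and real $p_0,\dots,p_n,q_1,\dots,q_n$ with $p_k^2+q_k^2>0$ for $1\le k\le n$. Assume $G$ satisfies the monotonicity condition (M) and the positivity condition (W). Then problem (P) has a unique solution $(m,\overline{H})$. Moreover, $$m(x)=\frac{c_j}{\left(a_0^*+\sum_{k=1}^{n}a_k^*\cos(2\pi kx)+b_k^*\sin(2\pi kx)-V(x)\right)^{1/\alpha}},\qquad \overline{H}=a_0^*-p_0,$$ where $(a_0^*,\dots,a_n^*,b_1^*,\dots,b_n^* )\in\mathcal{C}$ is the unique solution in $\mathcal{C}$ of the system $$\frac{\partial\Phi_\alpha}{\partial a_0}=1,\quad \frac{\partial\Phi_\alpha}{\partial a_k}=\frac{p_k a_k+q_k b_k}{p_k^2+q_k^2},\quad \frac{\partial\Phi_\alpha}{\partial b_k}=\frac{p_k b_k-q_k a_k}{p_k^2+q_k^2},\quad 1\le k\le n. \tag{S}$$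
   Context: $\mathbb{T}=\mathbb{R}/\mathbb{Z}$ (functions on $\mathbb{T}$ are 1-periodic functions on $\mathbb{R}$). Problem (P): given $0<\alpha\le2$, $j\ne0$, $V,G\in C^2(\mathbb{T})$, find $(m,\overline{H})\in C(\mathbb{T})\times\mathbb{R}$ with $m>0$ on $\mathbb{T}$, $\int_{\mathbb{T}}m=1$, and $\frac{j^2}{2m(x)^\alpha}+V(x)=\int_{\mathbb{T}}G(x-y)m(y)\,dy+\overline{H}$ for all $x\in\mathbb{T}$. Condition (M): $\int_{\mathbb{T}^2}G(x-y)f(x)f(y)\,dx\,dy\ge0$ for all $f\in C(\mathbb{T})$. Condition (W): $\int_{\mathbb{T}}G(y)\,dy>0$. Set $c_j=(j^2/2)^{1/\alpha}$ and let $\phi_\alpha:(0,\infty)\to\mathbb{R}$ be $\phi_\alpha(t)=\frac{c_j\alpha}{\alpha-1}t^{(\alpha-1)/\alpha}$ if $\alpha\ne1$ and $\phi_\alpha(t)=c_j\ln t$ if $\alpha=1$ (so $\phi_\alpha'(t)=c_j t^{-1/\alpha}$). $\mathcal{C}\subset\mathbb{R}^{2n+1}$ is the set of $(a_0,\dots,a_n,b_1,\dots,b_n)$ with $a_0+\sum_{k=1}^n(a_k\cos(2\pi kx)+b_k\sin(2\pi kx))-V(x)>0$ for all $x\in\mathbb{T}$, and for such points $\Phi_\alpha(a_0,\dots,a_n,b_1,\dots,b_n)=\int_{\mathbb{T}}\phi_\alpha\big(a_0+\sum_{k=1}^n(a_k\cos(2\pi ky)+b_k\sin(2\pi ky))-V(y)\big)\,dy$.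 *)

theory Defs
  imports "HOL-Analysis.Analysis"
begin

text \<open>Functions on the torus T = R/Z are 1-periodic functions on R.\<close>

definition periodic1 :: "(real \<Rightarrow> real) \<Rightarrow> bool" where
  "periodic1 f \<longleftrightarrow> (\<forall>x. f (x + 1) = f x)"

definition C0_T :: "(real \<Rightarrow> real) \<Rightarrow> bool" where
  "C0_T f \<longleftrightarrow> periodic1 f \<and> continuous_on UNIV f"

definition C2_T :: "(real \<Rightarrow> real) \<Rightarrow> bool" where
  "C2_T V \<longleftrightarrow> periodic1 V \<and>
     (\<exists>V' V''. (\<forall>x. (V has_real_derivative V' x) (at x)) \<and>
               (\<forall>x. (V' has_real_derivative V'' x) (at x)) \<and>
               continuous_on UNIV V'')"

text \<open>Coefficient vectors in R^(2n+1) are represented by functions a, b :: nat => real,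
  of which only a 0..a n and b 1..b n are relevant.\<close>
definition trig :: "nat \<Rightarrow> (nat \<Rightarrow> real) \<Rightarrow> (nat \<Rightarrow> real) \<Rightarrow> real \<Rightarrow> real" where
  "trig n a b x = a 0 + (\<Sum>k=1..n. a k * cos (2 * pi * real k * x) + b k * sin (2 * pi * real k * x))"

definition solves_P :: "real \<Rightarrow> real \<Rightarrow> (real \<Rightarrow> real) \<Rightarrow> (real \<Rightarrow> real) \<Rightarrow>
    (real \<Rightarrow> real) \<Rightarrow> real \<Rightarrow> bool" where
  "solves_P \<alpha> j V G m H \<longleftrightarrow>
     C0_T m \<and> (\<forall>x. m x > 0) \<and> integral {0..1} m = 1 \<and>
     (\<forall>x. j\<^sup>2 / (2 * m x powr \<alpha>) + V x = integral {0..1} (\<lambda>y. G (x - y) * m y) + H)"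

definition cond_M :: "(real \<Rightarrow> real) \<Rightarrow> bool" where
  "cond_M G \<longleftrightarrow> (\<forall>f. C0_T f \<longrightarrow>
     integral {0..1} (\<lambda>x. integral {0..1} (\<lambda>y. G (x - y) * f x * f y)) \<ge> 0)"

definition cond_W :: "(real \<Rightarrow> real) \<Rightarrow> bool" where
  "cond_W G \<longleftrightarrow> integral {0..1} G > 0"

definition c_j :: "real \<Rightarrow> real \<Rightarrow> real" where
  "c_j \<alpha> j = (j\<^sup>2 / 2) powr (1 / \<alpha>)"

definition phi :: "real \<Rightarrow> real \<Rightarrow> real \<Rightarrow> real" where
  "phi \<alpha> j t = (if \<alpha> = 1 then c_j \<alpha> j * ln t
                 else c_j \<alpha> j * \<alpha> / (\<alpha> - 1) * t powr ((\<alpha> - 1) / \<alpha>))"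

definition in_C :: "nat \<Rightarrow> (real \<Rightarrow> real) \<Rightarrow> (nat \<Rightarrow> real) \<Rightarrow> (nat \<Rightarrow> real) \<Rightarrow> bool" where
  "in_C n V a b \<longleftrightarrow> (\<forall>x. trig n a b x - V x > 0)"

definition Phi :: "real \<Rightarrow> real \<Rightarrow> nat \<Rightarrow> (real \<Rightarrow> real) \<Rightarrow> (nat \<Rightarrow> real) \<Rightarrow> (nat \<Rightarrow> real) \<Rightarrow> real" where
  "Phi \<alpha> j n V a b = integral {0..1} (\<lambda>y. phi \<alpha> j (trig n a b y - V y))"

definition system_S :: "real \<Rightarrow> real \<Rightarrow> nat \<Rightarrow> (real \<Rightarrow> real) \<Rightarrow> (nat \<Rightarrow> real) \<Rightarrow> (nat \<Rightarrow> real)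
    \<Rightarrow> (nat \<Rightarrow> real) \<Rightarrow> (nat \<Rightarrow> real) \<Rightarrow> bool" where
  "system_S \<alpha> j n V p q a b \<longleftrightarrow>
     ((\<lambda>t. Phi \<alpha> j n V (a(0 := t)) b) has_real_derivative 1) (at (a 0)) \<and>
     (\<forall>k\<in>{1..n}.
        ((\<lambda>t. Phi \<alpha> j n V (a(k := t)) b) has_real_derivative
            ((p k * a k + q k * b k) / ((p k)\<^sup>2 + (q k)\<^sup>2))) (at (a k)) \<and>
        ((\<lambda>t. Phi \<alpha> j n V a (b(k := t))) has_real_derivative
            ((p k * b k - q k * a k) / ((p k)\<^sup>2 + (q k)\<^sup>2))) (at (b k)))"

end

theory Submission
  imports Defs "HOL-Homology.Brouwer_Degree"
begin

text \<open>Uniqueness is the Lasry--Lions monotonicity argument: testing the difference of the equations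
  for two solutions against \<open>m\<^sub>1 - m\<^sub>2\<close> (the constants cancel since both masses are one),
  condition (M) gives \<open>\<integral> (m\<^sub>1 - m\<^sub>2) (j\<^sup>2/2m\<^sub>1\<^sup>\<alpha> - j\<^sup>2/2m\<^sub>2\<^sup>\<alpha>) \<ge> 0\<close>, while the integrand is
  nonpositive and vanishes only where \<open>m\<^sub>1 = m\<^sub>2\<close>.

  As \<open>G\<close> is a trigonometric polynomial, \<open>G * m\<close> is the trigonometric polynomial whose coefficients
  arise from the Fourier moments of \<open>m\<close> by the rotation-dilation \<open>(p\<^sub>k, q\<^sub>k)\<close>. Hence (P) amounts to
  \<open>m = c\<^sub>j / (trig a b - V)\<^bsup>1/\<alpha>\<^esup>\<close> with \<open>(a, b) \<in> \<C>\<close> subject to moment equations, and these are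
  exactly (S) once \<open>\<Phi>\<^sub>\<alpha>\<close> is differentiated under the integral sign; uniqueness for (S) follows.

  For existence, prescribe the \<open>2n\<close> moments as a vector \<open>u\<close>, which fixes \<open>a\<^sub>k, b\<^sub>k\<close> for
  \<open>k \<ge> 1\<close>, and choose \<open>a\<^sub>0\<close> as the unique level giving mass one: the mass decreases strictly in
  \<open>a\<^sub>0\<close>, is small for large \<open>a\<^sub>0\<close>, and exceeds one close to the infimum because \<open>trig - V\<close> is
  \<open>C\<^sup>2\<close> and touches its minimum quadratically, which with \<open>\<alpha> \<le> 2\<close> makes the density
  non-integrable in the limit. The moments of this density depend continuously on \<open>u\<close> and are
  bounded by one, so Brouwer's theorem gives a fixed point.\<close>

section \<open>Brouwer's fixed point theorem for finitely supported sequences\<close>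

lemma homotopic_with_top_of_set_intro:
  fixes h :: "real \<times> 'a::topological_space \<Rightarrow> 'b::topological_space"
  assumes "continuous_on ({0..1} \<times> S) h" "h ` ({0..1} \<times> S) \<subseteq> T"
    "\<And>x. x \<in> S \<Longrightarrow> h (0, x) = f x" "\<And>x. x \<in> S \<Longrightarrow> h (1, x) = g x"
  shows "homotopic_with (\<lambda>x. True) (top_of_set S) (top_of_set T) f g"
  apply (subst homotopic_with, simp)
  apply (rule exI[of _ h])
  using assms by (simp add: subtopology_Times[symmetric] image_subset_iff_funcset[symmetric])

lemma continuous_on_snd_component[continuous_intros]:
  "continuous_on A (\<lambda>x::'a::topological_space \<times> (nat \<Rightarrow> real). snd x i)"
  by (rule continuous_on_compose2[OF continuous_on_product_coordinates continuous_on_snd]) auto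

definition fsphere :: "nat \<Rightarrow> (nat \<Rightarrow> real) set" where
  "fsphere p = {x. (\<Sum>i\<le>p. x i ^ 2) = 1 \<and> (\<forall>i>p. x i = 0)}"

definition fs_nonzero :: "nat \<Rightarrow> (nat \<Rightarrow> real) set" where
  "fs_nonzero p = {v. (\<forall>i>p. v i = 0) \<and> v \<noteq> (\<lambda>i. 0)}"

definition fs_normalize :: "nat \<Rightarrow> (nat \<Rightarrow> real) \<Rightarrow> nat \<Rightarrow> real" where
  "fs_normalize p v = (\<lambda>i. v i / sqrt (\<Sum>j\<le>p. v j ^ 2))"

lemma nsphere_eq_fsphere: "nsphere p = top_of_set (fsphere p)"
  by (simp add: nsphere euclidean_product_topology fsphere_def)

lemma fs_nonzero_sum_squares_pos:
  assumes "v \<in> fs_nonzero p"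
  shows "(\<Sum>j\<le>p. v j ^ 2) > 0"
proof -
  have "(\<Sum>j\<le>p. v j ^ 2) \<noteq> 0"
  proof
    assume "(\<Sum>j\<le>p. v j ^ 2) = 0"
    then have "\<forall>j\<le>p. v j = 0" by (simp add: sum_nonneg_eq_0_iff)
    then have "v = (\<lambda>i. 0)"
    proof (intro ext)
      fix i show "v i = 0" if "\<forall>j\<le>p. v j = 0"
        using that assms unfolding fs_nonzero_def by (cases "i \<le> p") auto
    qed
    then show False using assms unfolding fs_nonzero_def by simp
  qed
  moreover have "(\<Sum>j\<le>p. v j ^ 2) \<ge> 0" by (simp add: sum_nonneg)
  ultimately show ?thesis by simp
qed

lemma continuous_on_fs_normalize: "continuous_on (fs_nonzero p) (fs_normalize p)"
  unfolding fs_normalize_def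
  apply (rule continuous_on_coordinatewise_then_product)
  apply (intro continuous_intros continuous_on_product_coordinates[THEN continuous_on_subset])
  using fs_nonzero_sum_squares_pos by (auto simp: less_le)

lemma fs_normalize_in_fsphere: "v \<in> fs_nonzero p \<Longrightarrow> fs_normalize p v \<in> fsphere p"
  using fs_nonzero_sum_squares_pos[of v p]
  by (auto simp: fsphere_def fs_nonzero_def fs_normalize_def power_divide simp flip: sum_divide_distrib)

lemma fs_normalize_fsphere: "y \<in> fsphere p \<Longrightarrow> fs_normalize p y = y"
  by (simp add: fsphere_def fs_normalize_def)

lemma homotopic_fs_normalize:
  fixes h :: "real \<times> (nat \<Rightarrow> real) \<Rightarrow> nat \<Rightarrow> real"
  assumes "continuous_on ({0..1} \<times> fsphere p) h" "h ` ({0..1} \<times> fsphere p) \<subseteq> fs_nonzero p"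
  shows "homotopic_with (\<lambda>x. True) (top_of_set (fsphere p)) (top_of_set (fsphere p))
           (\<lambda>y. fs_normalize p (h (0, y))) (\<lambda>y. fs_normalize p (h (1, y)))"
proof (rule homotopic_with_top_of_set_intro[where h="fs_normalize p \<circ> h"])
  show "continuous_on ({0..1} \<times> fsphere p) (fs_normalize p \<circ> h)"
    using assms by (intro continuous_on_compose continuous_on_subset[OF continuous_on_fs_normalize])
  show "(fs_normalize p \<circ> h) ` ({0..1} \<times> fsphere p) \<subseteq> fsphere p"
    using assms(2) by (auto intro!: fs_normalize_in_fsphere)
qed simp_all

lemma fixpoint_free_diff_scaled_in_fs_nonzero:
  assumes supp: "\<And>u i. p < i \<Longrightarrow> f u i = 0" and bnd: "\<And>u. (\<Sum>i\<le>p. (f u i)\<^sup>2) \<le> 1"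
    and nofix: "\<And>u. f u \<noteq> u" and s: "0 \<le> s" "s \<le> 1" and y: "y \<in> fsphere p"
  shows "(\<lambda>i. y i - s * f y i) \<in> fs_nonzero p"
proof -
  have "(\<lambda>i. y i - s * f y i) \<noteq> (\<lambda>i. 0)"
  proof
    assume "(\<lambda>i. y i - s * f y i) = (\<lambda>i. 0)"
    then have yy: "\<And>i. y i = s * f y i" by (simp add: fun_eq_iff)
    have "s \<noteq> 1"
    proof
      assume "s = 1"
      then have "f y = y" using yy by (simp add: fun_eq_iff)
      then show False using nofix by blast
    qed
    have "1 = (\<Sum>i\<le>p. (y i)\<^sup>2)" using y unfolding fsphere_def by simp
    also have "\<dots> = s\<^sup>2 * (\<Sum>i\<le>p. (f y i)\<^sup>2)" by (simp add: yy power_mult_distrib sum_distrib_left)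
    also have "\<dots> \<le> s\<^sup>2 * 1" by (rule mult_left_mono[OF bnd]) simp
    also have "\<dots> < 1" using \<open>s \<noteq> 1\<close> s by (simp add: power_less_one_iff abs_square_less_1)
    finally show False by simp
  qed
  then show ?thesis using y supp unfolding fsphere_def fs_nonzero_def by auto
qed

lemma fixpoint_free_diff_in_fs_nonzero:
  assumes supp: "\<And>u i. p < i \<Longrightarrow> f u i = 0" and nofix: "\<And>u. f u \<noteq> u" and z: "\<forall>i>p. z i = 0"
  shows "(\<lambda>i. z i - f z i) \<in> fs_nonzero p"
proof -
  have "(\<lambda>i. z i - f z i) \<noteq> (\<lambda>i. 0)"
  proof
    assume "(\<lambda>i. z i - f z i) = (\<lambda>i. 0)"
    then have "\<forall>i. z i = f z i" by (simp add: fun_eq_iff)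
    then have "f z = z" by (simp add: fun_eq_iff)
    then show False using nofix by blast
  qed
  then show ?thesis using z supp unfolding fs_nonzero_def by auto
qed

lemma fixpoint_free_imp_contractible_fsphere:
  fixes f :: "(nat \<Rightarrow> real) \<Rightarrow> (nat \<Rightarrow> real)"
  assumes cont: "continuous_on UNIV f" and supp: "\<And>u i. p < i \<Longrightarrow> f u i = 0"
    and bnd: "\<And>u. (\<Sum>i\<le>p. (f u i)\<^sup>2) \<le> 1" and nofix: "\<And>u. f u \<noteq> u"
  shows "contractible_space (top_of_set (fsphere p))"
proof -
  let ?S = "fsphere p"
  \<comment> \<open>\<open>y \<mapsto> y - f y\<close> is homotopic on the sphere both to the identity and to a constant.\<close>
  define h1 where "h1 = (\<lambda>(s::real, y::nat\<Rightarrow>real) i. y i - s * f y i)"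
  define h2 where "h2 = (\<lambda>(s::real, y::nat\<Rightarrow>real) i. (1 - s) * y i - f (\<lambda>i. (1 - s) * y i) i)"
  have fc: "continuous_on A (\<lambda>x. f (k x) i)" if "continuous_on A k"
    for A :: "(real \<times> (nat \<Rightarrow> real)) set" and k i
    using continuous_on_compose2[OF continuous_on_product_then_coordinatewise[OF cont] that] by simp
  have scale: "continuous_on A (\<lambda>x::real\<times>(nat\<Rightarrow>real). \<lambda>i. (1 - fst x) * snd x i)" for A
    by (rule continuous_on_coordinatewise_then_product) (intro continuous_intros)
  have h1c: "continuous_on ({0..1} \<times> ?S) h1" and h2c: "continuous_on ({0..1} \<times> ?S) h2"
    unfolding h1_def h2_def
    by (rule continuous_on_coordinatewise_then_product, simp add: case_prod_unfold,
        intro continuous_intros fc scale)+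
  have h1Z: "h1 (s, y) \<in> fs_nonzero p" if "0 \<le> s" "s \<le> 1" "y \<in> ?S" for s y
    using fixpoint_free_diff_scaled_in_fs_nonzero[OF supp bnd nofix that] unfolding h1_def by simp
  have h2Z: "h2 (s, y) \<in> fs_nonzero p" if y: "y \<in> ?S" for s y
  proof -
    have "\<forall>i>p. (1 - s) * y i = 0" using y unfolding fsphere_def by simp
    then have "(\<lambda>i. (1 - s) * y i - f (\<lambda>i. (1 - s) * y i) i) \<in> fs_nonzero p"
      using fixpoint_free_diff_in_fs_nonzero[OF supp nofix] by simp
    then show ?thesis unfolding h2_def by simp
  qed
  have h1S: "h1 ` ({0..1} \<times> ?S) \<subseteq> fs_nonzero p" and h2S: "h2 ` ({0..1} \<times> ?S) \<subseteq> fs_nonzero p"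
    using h1Z h2Z by auto
  have "homotopic_with (\<lambda>x. True) (top_of_set ?S) (top_of_set ?S) id (\<lambda>y. fs_normalize p (h2 (1, y)))"
  proof (rule homotopic_with_trans)
    have "homotopic_with (\<lambda>x. True) (top_of_set ?S) (top_of_set ?S)
        (\<lambda>y. fs_normalize p (h1 (0, y))) (\<lambda>y. fs_normalize p (h1 (1, y)))"
      by (rule homotopic_fs_normalize[OF h1c h1S])
    then show "homotopic_with (\<lambda>x. True) (top_of_set ?S) (top_of_set ?S) id (\<lambda>y. fs_normalize p (h1 (1, y)))"
      by (rule homotopic_with_eq) (auto simp: h1_def fs_normalize_fsphere)
    show "homotopic_with (\<lambda>x. True) (top_of_set ?S) (top_of_set ?S)
        (\<lambda>y. fs_normalize p (h1 (1, y))) (\<lambda>y. fs_normalize p (h2 (1, y)))"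
      using homotopic_fs_normalize[OF h2c h2S] by (simp add: h1_def h2_def)
  qed
  moreover have "(\<lambda>y. fs_normalize p (h2 (1, y))) = (\<lambda>y. fs_normalize p (\<lambda>i. - f (\<lambda>i. 0) i))"
    unfolding h2_def by simp
  ultimately show ?thesis unfolding contractible_space_def by metis
qed

lemma brouwer_finite_support:
  fixes f :: "(nat \<Rightarrow> real) \<Rightarrow> (nat \<Rightarrow> real)"
  assumes cont: "continuous_on UNIV f" and supp: "\<And>u i. N \<le> i \<Longrightarrow> f u i = 0"
    and bnd: "\<And>u. (\<Sum>i<N. (f u i)\<^sup>2) \<le> 1"
  shows "\<exists>u. f u = u"
proof (rule ccontr)
  assume nofix: "\<not> (\<exists>u. f u = u)"
  show False
  proof (cases N)
    case 0
    then have "f (\<lambda>i. 0) = (\<lambda>i. 0)" using supp by auto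
    then show False using nofix by blast
  next
    case (Suc p)
    have "contractible_space (top_of_set (fsphere p))"
    proof (rule fixpoint_free_imp_contractible_fsphere[OF cont])
      show "f u i = 0" if "p < i" for u i using supp[of i u] that Suc by simp
      show "(\<Sum>i\<le>p. (f u i)\<^sup>2) \<le> 1" for u using bnd[of u] Suc by (simp add: lessThan_Suc_atMost)
      show "f u \<noteq> u" for u using nofix by blast
    qed
    then show False using non_contractible_space_nsphere[of p] by (simp add: nsphere_eq_fsphere)
  qed
qed

section \<open>Periodic functions and trigonometric polynomials\<close>

lemma periodic1_of_int:
  assumes "periodic1 f"
  shows "f (x + of_int k) = f x"
proof (induction k rule: int_induct[where k=0])
  case (step1 i)
  then show ?case using assms unfolding periodic1_def by (metis add.assoc of_int_add of_int_1)
next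
  case (step2 i)
  then show ?case using assms unfolding periodic1_def by (metis add.assoc diff_add_cancel of_int_diff of_int_1)
qed simp

lemma periodic1_frac: "periodic1 f \<Longrightarrow> f (frac x) = f x"
  using periodic1_of_int[of f "frac x" "\<lfloor>x\<rfloor>"] by (simp add: frac_def)

lemma frac_in_01: "frac x \<in> {0..1}"
  using frac_lt_1[of x] by simp

lemma periodic1_attains_inf:
  fixes g :: "real \<Rightarrow> real"
  assumes "periodic1 g" "continuous_on {0..1} g"
  shows "\<exists>x0\<in>{0..1}. \<forall>x. g x0 \<le> g x"
proof -
  obtain x0 where "x0 \<in> {0..1}" "\<forall>y\<in>{0..1}. g x0 \<le> g y"
    using continuous_attains_inf[of "{0..1::real}" g] assms by auto
  then show ?thesis using periodic1_frac[OF assms(1)] frac_in_01 by metis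
qed

lemma cos_add_2pi_nat: "cos (y + 2 * pi * real k) = cos y"
proof (induction k)
  case (Suc k)
  have "y + 2 * pi * real (Suc k) = (y + 2 * pi * real k) + 2 * pi" by (simp add: algebra_simps)
  then show ?case by (simp only: Suc cos_periodic)
qed simp

lemma sin_add_2pi_nat: "sin (y + 2 * pi * real k) = sin y"
proof (induction k)
  case (Suc k)
  have "y + 2 * pi * real (Suc k) = (y + 2 * pi * real k) + 2 * pi" by (simp add: algebra_simps)
  then show ?case by (simp only: Suc sin_periodic)
qed simp

lemma periodic1_trig: "periodic1 (trig n a b)"
proof -
  have "2 * pi * real k * (x + 1) = 2 * pi * real k * x + 2 * pi * real k" for k x
    by (simp add: algebra_simps)
  then show ?thesis unfolding periodic1_def trig_def by (simp add: cos_add_2pi_nat sin_add_2pi_nat)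
qed

lemma continuous_on_trig: "continuous_on S (trig n a b)"
  unfolding trig_def by (intro continuous_intros)

lemma continuous_on_trig_shift: "continuous_on S (\<lambda>y. trig n a b (x - y))"
  by (rule continuous_on_compose2[OF continuous_on_trig[of UNIV]]) (intro continuous_intros, auto)

lemma C2_T_trig: "C2_T (trig n a b)"
proof -
  define \<omega> where "\<omega> k = 2 * pi * real k" for k :: nat
  define T1 where "T1 x = (\<Sum>k=1..n. b k * \<omega> k * cos (\<omega> k * x) - a k * \<omega> k * sin (\<omega> k * x))" for x
  define T2 where "T2 x = (\<Sum>k=1..n. - (b k * \<omega> k * \<omega> k * sin (\<omega> k * x)) - a k * \<omega> k * \<omega> k * cos (\<omega> k * x))" for x
  have "(trig n a b has_real_derivative T1 x) (at x)" for x
  proof -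
    have "((\<lambda>x. a 0 + (\<Sum>k=1..n. a k * cos (\<omega> k * x) + b k * sin (\<omega> k * x))) has_real_derivative
       0 + (\<Sum>k=1..n. a k * (- sin (\<omega> k * x) * \<omega> k) + b k * (cos (\<omega> k * x) * \<omega> k))) (at x)"
      by (intro derivative_intros DERIV_sum DERIV_cmult DERIV_add) (auto intro!: derivative_eq_intros)
    then show ?thesis unfolding T1_def trig_def[abs_def] \<omega>_def
      by (rule DERIV_cong) (subst add_0_left, rule sum.cong[OF refl], simp add: algebra_simps)
  qed
  moreover have "(T1 has_real_derivative T2 x) (at x)" for x
  proof -
    have "((\<lambda>x. (\<Sum>k=1..n. b k * \<omega> k * cos (\<omega> k * x) - a k * \<omega> k * sin (\<omega> k * x))) has_real_derivative
       (\<Sum>k=1..n. b k * \<omega> k * (- sin (\<omega> k * x) * \<omega> k) - a k * \<omega> k * (cos (\<omega> k * x) * \<omega> k))) (at x)"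
      by (intro DERIV_sum DERIV_cmult DERIV_diff) (auto intro!: derivative_eq_intros)
    then show ?thesis unfolding T1_def[abs_def] T2_def
      by (rule DERIV_cong) (rule sum.cong[OF refl], simp add: algebra_simps)
  qed
  moreover have "continuous_on UNIV T2"
    unfolding T2_def by (intro continuous_intros)
  ultimately show ?thesis unfolding C2_T_def using periodic1_trig by blast
qed

lemma C2_T_diff:
  assumes "C2_T f" "C2_T g"
  shows "C2_T (\<lambda>x. f x - g x)"
proof -
  obtain f' f'' g' g'' where
    "\<And>x. (f has_real_derivative f' x) (at x)" "\<And>x. (f' has_real_derivative f'' x) (at x)"
    "continuous_on UNIV f''"
    "\<And>x. (g has_real_derivative g' x) (at x)" "\<And>x. (g' has_real_derivative g'' x) (at x)"
    "continuous_on UNIV g''"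
    using assms unfolding C2_T_def by metis
  moreover have "periodic1 (\<lambda>x. f x - g x)" using assms unfolding C2_T_def periodic1_def by simp
  ultimately show ?thesis unfolding C2_T_def
    by (intro conjI exI[of _ "\<lambda>x. f' x - g' x"] exI[of _ "\<lambda>x. f'' x - g'' x"])
       (auto intro: DERIV_diff continuous_intros)
qed

lemma trig_fun_upd_a:
  assumes "k \<le> n"
  shows "trig n (a(k := t)) b y = trig n a b y + (t - a k) * cos (2 * pi * real k * y)"
proof (cases "k = 0")
  case True
  have "(\<Sum>i = 1..n. (a(k := t)) i * cos (2 * pi * real i * y) + b i * sin (2 * pi * real i * y))
     = (\<Sum>i = 1..n. a i * cos (2 * pi * real i * y) + b i * sin (2 * pi * real i * y))"
    by (rule sum.cong) (use True in auto)
  then show ?thesis using True unfolding trig_def by simp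
next
  case False
  have "(\<Sum>i = 1..n. (a(k := t)) i * cos (2 * pi * real i * y) + b i * sin (2 * pi * real i * y))
     = (\<Sum>i = 1..n. (a i * cos (2 * pi * real i * y) + b i * sin (2 * pi * real i * y))
        + (if i = k then (t - a k) * cos (2 * pi * real k * y) else 0))"
    by (rule sum.cong) (auto simp: algebra_simps)
  then show ?thesis using False assms unfolding trig_def by (simp add: sum.distrib)
qed

lemma trig_fun_upd_b:
  assumes "k \<in> {1..n}"
  shows "trig n a (b(k := t)) y = trig n a b y + (t - b k) * sin (2 * pi * real k * y)"
proof -
  have "(\<Sum>i = 1..n. a i * cos (2 * pi * real i * y) + (b(k := t)) i * sin (2 * pi * real i * y))
     = (\<Sum>i = 1..n. (a i * cos (2 * pi * real i * y) + b i * sin (2 * pi * real i * y))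
        + (if i = k then (t - b k) * sin (2 * pi * real k * y) else 0))"
    by (rule sum.cong) (auto simp: algebra_simps)
  then show ?thesis using assms unfolding trig_def by (simp add: sum.distrib)
qed

text \<open>Convolving with \<open>trig n p q\<close> maps the Fourier moments \<open>(C\<^sub>k, S\<^sub>k)\<close> of \<open>m\<close> to the
  coefficients \<open>(p\<^sub>k C\<^sub>k - q\<^sub>k S\<^sub>k, p\<^sub>k S\<^sub>k + q\<^sub>k C\<^sub>k)\<close>.\<close>

lemma trig_diff_mult:
  "trig n p q (x - y) * my = p 0 * my + (\<Sum>k=1..n.
      cos (2 * pi * real k * x) * (p k * (my * cos (2 * pi * real k * y)) - q k * (my * sin (2 * pi * real k * y)))
    + sin (2 * pi * real k * x) * (p k * (my * sin (2 * pi * real k * y)) + q k * (my * cos (2 * pi * real k * y))))"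
proof -
  have e: "2 * pi * real k * (x - y) = 2 * pi * real k * x - 2 * pi * real k * y" for k
    by (simp add: algebra_simps)
  have "trig n p q (x - y) * my = p 0 * my + (\<Sum>k=1..n. (p k * cos (2 * pi * real k * (x - y))
      + q k * sin (2 * pi * real k * (x - y))) * my)"
    unfolding trig_def by (simp add: algebra_simps sum_distrib_right sum_distrib_left)
  then show ?thesis
    by (simp only: e cos_diff sin_diff) (simp add: algebra_simps)
qed

lemma integral_trig_convolution:
  assumes m: "continuous_on {0..1} m"
  shows "integral {0..1} (\<lambda>y. trig n p q (x - y) * m y) = p 0 * integral {0..1} m + (\<Sum>k=1..n.
      cos (2 * pi * real k * x) * (p k * integral {0..1} (\<lambda>y. m y * cos (2 * pi * real k * y))
        - q k * integral {0..1} (\<lambda>y. m y * sin (2 * pi * real k * y)))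
    + sin (2 * pi * real k * x) * (p k * integral {0..1} (\<lambda>y. m y * sin (2 * pi * real k * y))
        + q k * integral {0..1} (\<lambda>y. m y * cos (2 * pi * real k * y))))"
proof -
  have hi: "(f has_integral integral {0..1} f) {0..1}" if "continuous_on {0..1} f" for f :: "real \<Rightarrow> real"
    using that by (intro integrable_integral integrable_continuous_interval)
  have ic: "((\<lambda>y. m y * cos (2 * pi * real k * y)) has_integral integral {0..1} (\<lambda>y. m y * cos (2 * pi * real k * y))) {0..1}"
    and isn: "((\<lambda>y. m y * sin (2 * pi * real k * y)) has_integral integral {0..1} (\<lambda>y. m y * sin (2 * pi * real k * y))) {0..1}"
    and i0: "(m has_integral integral {0..1} m) {0..1}" for k
    by (rule hi, intro continuous_intros m)+
  show ?thesis
    by (subst trig_diff_mult, rule integral_unique)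
       (intro has_integral_add has_integral_sum finite_atLeastAtMost has_integral_mult_right has_integral_diff ic isn i0)
qed

lemma rotation_left_inverse:
  fixes P Q A B :: real
  assumes "P\<^sup>2 + Q\<^sup>2 \<noteq> 0"
  shows "P * ((P*A + Q*B)/(P\<^sup>2+Q\<^sup>2)) - Q * ((P*B - Q*A)/(P\<^sup>2+Q\<^sup>2)) = A"
    and "P * ((P*B - Q*A)/(P\<^sup>2+Q\<^sup>2)) + Q * ((P*A + Q*B)/(P\<^sup>2+Q\<^sup>2)) = B"
proof -
  have "P * ((P*A + Q*B)/(P\<^sup>2+Q\<^sup>2)) - Q * ((P*B - Q*A)/(P\<^sup>2+Q\<^sup>2))
      = (P * (P*A + Q*B) - Q * (P*B - Q*A))/(P\<^sup>2+Q\<^sup>2)"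
    by (simp only: times_divide_eq_right) (rule diff_divide_distrib[symmetric])
  also have "P * (P*A + Q*B) - Q * (P*B - Q*A) = A * (P\<^sup>2+Q\<^sup>2)"
    by (simp add: algebra_simps power2_eq_square)
  finally show "P * ((P*A + Q*B)/(P\<^sup>2+Q\<^sup>2)) - Q * ((P*B - Q*A)/(P\<^sup>2+Q\<^sup>2)) = A"
    using assms by (metis nonzero_mult_div_cancel_right)
  have "P * ((P*B - Q*A)/(P\<^sup>2+Q\<^sup>2)) + Q * ((P*A + Q*B)/(P\<^sup>2+Q\<^sup>2))
      = (P * (P*B - Q*A) + Q * (P*A + Q*B))/(P\<^sup>2+Q\<^sup>2)"
    by (simp only: times_divide_eq_right) (rule add_divide_distrib[symmetric])
  also have "P * (P*B - Q*A) + Q * (P*A + Q*B) = B * (P\<^sup>2+Q\<^sup>2)"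
    by (simp add: algebra_simps power2_eq_square)
  finally show "P * ((P*B - Q*A)/(P\<^sup>2+Q\<^sup>2)) + Q * ((P*A + Q*B)/(P\<^sup>2+Q\<^sup>2)) = B"
    using assms by (metis nonzero_mult_div_cancel_right)
qed

lemma rotation_right_inverse:
  fixes P Q C S :: real
  assumes "P\<^sup>2 + Q\<^sup>2 \<noteq> 0"
  shows "(P * (P * C - Q * S) + Q * (Q * C + P * S)) / (P\<^sup>2 + Q\<^sup>2) = C"
    and "(P * (Q * C + P * S) - Q * (P * C - Q * S)) / (P\<^sup>2 + Q\<^sup>2) = S"
proof -
  have "P * (P * C - Q * S) + Q * (Q * C + P * S) = C * (P\<^sup>2 + Q\<^sup>2)"
    "P * (Q * C + P * S) - Q * (P * C - Q * S) = S * (P\<^sup>2 + Q\<^sup>2)"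
    by (simp_all add: algebra_simps power2_eq_square)
  then show "(P * (P * C - Q * S) + Q * (Q * C + P * S)) / (P\<^sup>2 + Q\<^sup>2) = C"
    and "(P * (Q * C + P * S) - Q * (P * C - Q * S)) / (P\<^sup>2 + Q\<^sup>2) = S"
    using assms by simp_all
qed

lemma rotation_inj:
  fixes P Q A B A' B' :: real
  assumes "P\<^sup>2 + Q\<^sup>2 \<noteq> 0"
    and "(P*A' + Q*B')/(P\<^sup>2+Q\<^sup>2) = (P*A + Q*B)/(P\<^sup>2+Q\<^sup>2)"
    and "(P*B' - Q*A')/(P\<^sup>2+Q\<^sup>2) = (P*B - Q*A)/(P\<^sup>2+Q\<^sup>2)"
  shows "A' = A" "B' = B"
proof -
  have "A' = P * ((P*A' + Q*B')/(P\<^sup>2+Q\<^sup>2)) - Q * ((P*B' - Q*A')/(P\<^sup>2+Q\<^sup>2))"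
    by (rule rotation_left_inverse(1)[OF assms(1), symmetric])
  also have "\<dots> = A" unfolding assms(2,3) by (rule rotation_left_inverse(1)[OF assms(1)])
  finally show "A' = A" .
  have "B' = P * ((P*B' - Q*A')/(P\<^sup>2+Q\<^sup>2)) + Q * ((P*A' + Q*B')/(P\<^sup>2+Q\<^sup>2))"
    by (rule rotation_left_inverse(2)[OF assms(1), symmetric])
  also have "\<dots> = B" unfolding assms(2,3) by (rule rotation_left_inverse(2)[OF assms(1)])
  finally show "B' = B" .
qed


lemma abs_trig_diff_le:
  "\<bar>trig n a b x - trig n a' b' x\<bar> \<le> \<bar>a 0 - a' 0\<bar> + (\<Sum>k=1..n. \<bar>a k - a' k\<bar> + \<bar>b k - b' k\<bar>)"
proof -
  let ?cs = "\<lambda>k. cos (2 * pi * real k * x)" and ?sn = "\<lambda>k. sin (2 * pi * real k * x)"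
  have "trig n a b x - trig n a' b' x
      = (a 0 - a' 0) + (\<Sum>k=1..n. (a k * ?cs k + b k * ?sn k) - (a' k * ?cs k + b' k * ?sn k))"
    unfolding trig_def sum_subtractf by simp
  also have "\<dots> = (a 0 - a' 0) + (\<Sum>k=1..n. (a k - a' k) * ?cs k + (b k - b' k) * ?sn k)"
    by (simp only: left_diff_distrib add_diff_add)
  finally have "\<bar>trig n a b x - trig n a' b' x\<bar>
      = \<bar>(a 0 - a' 0) + (\<Sum>k=1..n. (a k - a' k) * ?cs k + (b k - b' k) * ?sn k)\<bar>"
    by (rule arg_cong[where f=abs])
  also have "\<dots> \<le> \<bar>a 0 - a' 0\<bar> + \<bar>\<Sum>k=1..n. (a k - a' k) * ?cs k + (b k - b' k) * ?sn k\<bar>"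
    by (rule abs_triangle_ineq)
  also have "\<dots> \<le> \<bar>a 0 - a' 0\<bar> + (\<Sum>k=1..n. \<bar>(a k - a' k) * ?cs k + (b k - b' k) * ?sn k\<bar>)"
    by (intro add_left_mono sum_abs)
  also have "\<dots> \<le> \<bar>a 0 - a' 0\<bar> + (\<Sum>k=1..n. \<bar>a k - a' k\<bar> + \<bar>b k - b' k\<bar>)"
  proof (intro add_left_mono sum_mono)
    fix k
    have "\<bar>(a k - a' k) * ?cs k\<bar> \<le> \<bar>a k - a' k\<bar>" "\<bar>(b k - b' k) * ?sn k\<bar> \<le> \<bar>b k - b' k\<bar>"
      by (simp_all add: abs_mult mult_left_le)
    then show "\<bar>(a k - a' k) * ?cs k + (b k - b' k) * ?sn k\<bar> \<le> \<bar>a k - a' k\<bar> + \<bar>b k - b' k\<bar>"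
      using abs_triangle_ineq[of "(a k - a' k) * ?cs k" "(b k - b' k) * ?sn k"] by linarith
  qed
  finally show ?thesis .
qed


section \<open>Real analysis\<close>

lemma c_j_pos: "j \<noteq> 0 \<Longrightarrow> c_j \<alpha> j > 0"
  unfolding c_j_def by simp

lemma c_j_div_powr_inverse:
  assumes "\<alpha> > 0" "j \<noteq> 0" "t > 0"
  shows "j\<^sup>2 / (2 * (c_j \<alpha> j / t powr (1 / \<alpha>)) powr \<alpha>) = t"
proof -
  have "(c_j \<alpha> j / t powr (1 / \<alpha>)) powr \<alpha> = c_j \<alpha> j powr \<alpha> / (t powr (1 / \<alpha>)) powr \<alpha>"
    by (rule powr_divide)
  also have "\<dots> = j\<^sup>2 / 2 / t" using assms by (simp add: powr_powr c_j_def)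
  finally show ?thesis using assms by simp
qed

lemma phi_has_real_derivative:
  assumes "\<alpha> > 0" "s > 0"
  shows "(phi \<alpha> j has_real_derivative c_j \<alpha> j * s powr (- 1 / \<alpha>)) (at s)"
proof (cases "\<alpha> = 1")
  case True
  have e: "phi \<alpha> j = (\<lambda>t. c_j \<alpha> j * ln t)" using True unfolding phi_def by auto
  have "((\<lambda>t. c_j \<alpha> j * ln t) has_real_derivative c_j \<alpha> j * (1 / s)) (at s)"
    using assms by (auto intro!: derivative_eq_intros)
  moreover have "s powr (- 1 / \<alpha>) = 1 / s" using True assms by (simp add: powr_minus_divide)
  ultimately show ?thesis unfolding e by simp
next
  case False
  have e: "phi \<alpha> j = (\<lambda>t. c_j \<alpha> j * \<alpha> / (\<alpha> - 1) * t powr ((\<alpha> - 1) / \<alpha>))"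
    using False unfolding phi_def by auto
  have "((\<lambda>t. c_j \<alpha> j * \<alpha> / (\<alpha> - 1) * t powr ((\<alpha> - 1) / \<alpha>)) has_real_derivative
      c_j \<alpha> j * \<alpha> / (\<alpha> - 1) * (((\<alpha> - 1) / \<alpha>) * s powr ((\<alpha> - 1) / \<alpha> - 1))) (at s)"
    by (intro DERIV_cmult has_real_derivative_powr assms)
  moreover have "(\<alpha> - 1) / \<alpha> - 1 = - 1 / \<alpha>" using assms by (simp add: field_simps)
  moreover have "c_j \<alpha> j * \<alpha> / (\<alpha> - 1) * ((\<alpha> - 1) / \<alpha>) = c_j \<alpha> j" using assms False by (simp add: field_simps)
  ultimately show ?thesis unfolding e by (metis (no_types, lifting) mult.assoc)
qed

lemma continuous_on_phi: "\<alpha> > 0 \<Longrightarrow> continuous_on {0<..} (phi \<alpha> j)"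
  by (rule continuous_at_imp_continuous_on) (use phi_has_real_derivative[THEN DERIV_isCont] in auto)

lemma has_real_derivative_integral_phi:
  fixes w e :: "real \<Rightarrow> real"
  assumes a: "\<alpha> > 0" and cw: "continuous_on {0..1} w" and ce: "continuous_on {0..1} e"
    and wpos: "\<And>x. x \<in> {0..1} \<Longrightarrow> w x > 0" and eb: "\<And>x. x \<in> {0..1} \<Longrightarrow> \<bar>e x\<bar> \<le> 1"
  shows "((\<lambda>t. integral {0..1} (\<lambda>x. phi \<alpha> j (w x + (t - t0) * e x))) has_real_derivative
           integral {0..1} (\<lambda>x. c_j \<alpha> j / w x powr (1 / \<alpha>) * e x)) (at t0)"
proof -
  obtain x1 where x1: "x1 \<in> {0..1}" "\<And>y. y \<in> {0..1} \<Longrightarrow> w x1 \<le> w y"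
    using continuous_attains_inf[of "{0..1::real}" w] cw by auto
  define \<mu> where "\<mu> = w x1"
  have mu: "\<mu> > 0" using wpos x1 unfolding \<mu>_def by auto
  define U where "U = {t0 - \<mu>/2 <..< t0 + \<mu>/2}"
  have pos: "w x + (t - t0) * e x \<ge> \<mu>/2" if "t \<in> U" "x \<in> {0..1}" for t x
  proof -
    have "\<bar>(t - t0) * e x\<bar> \<le> \<bar>t - t0\<bar> * 1" unfolding abs_mult
      by (rule mult_left_mono[OF eb[OF that(2)]]) simp
    also have "\<dots> \<le> \<mu>/2" using that(1) unfolding U_def by (auto simp: abs_if)
    finally show ?thesis using x1(2)[OF that(2)] unfolding \<mu>_def by linarith
  qed
  have U: "t0 \<in> U" "open U" "convex U" using mu unfolding U_def by auto
  define fx where "fx = (\<lambda>t x. c_j \<alpha> j * (w x + (t - t0) * e x) powr (- 1 / \<alpha>) * e x)"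
  have "((\<lambda>t. integral (cbox 0 1) (\<lambda>x. phi \<alpha> j (w x + (t - t0) * e x))) has_field_derivative
          integral (cbox 0 1) (fx t0)) (at t0 within U)"
  proof (rule leibniz_rule_field_derivative[OF _ _ _ U(1,3)])
    fix t x assume tx: "t \<in> U" "x \<in> cbox (0::real) 1"
    have inner: "((\<lambda>t. w x + (t - t0) * e x) has_real_derivative e x) (at t)"
      by (auto intro!: derivative_eq_intros)
    have "w x + (t - t0) * e x > 0" using pos[of t x] tx mu by simp
    from DERIV_chain2[OF phi_has_real_derivative[OF a this] inner]
    show "((\<lambda>t. phi \<alpha> j (w x + (t - t0) * e x)) has_field_derivative fx t x) (at t within U)"
      unfolding fx_def by (rule has_field_derivative_at_within)
  next
    fix t assume t: "t \<in> U"
    have "continuous_on {0..1} (\<lambda>x. phi \<alpha> j (w x + (t - t0) * e x))"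
      using pos[OF t] mu
      by (intro continuous_on_compose2[OF continuous_on_phi[OF a]] continuous_intros cw ce) fastforce
    then show "(\<lambda>x. phi \<alpha> j (w x + (t - t0) * e x)) integrable_on cbox 0 1"
      by (simp add: integrable_continuous_interval)
  next
    have "continuous_on (U \<times> {0..1}) (\<lambda>z. w (snd z))" "continuous_on (U \<times> {0..1}) (\<lambda>z. e (snd z))"
      by (rule continuous_on_compose2[OF cw continuous_on_snd] continuous_on_compose2[OF ce continuous_on_snd],
          auto)+
    then show "continuous_on (U \<times> cbox 0 1) (\<lambda>(t, x). fx t x)"
      unfolding fx_def case_prod_unfold box_real using pos mu by (intro continuous_intros) fastforce+
  qed
  moreover have "integral {0..1} (fx t0) = integral {0..1} (\<lambda>x. c_j \<alpha> j / w x powr (1 / \<alpha>) * e x)"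
    unfolding fx_def by (rule integral_cong) (simp add: powr_minus_divide)
  ultimately show ?thesis using at_within_open[OF U(1,2)] by simp
qed

lemma MVT_abs:
  fixes f f' :: "real \<Rightarrow> real"
  assumes "\<And>y. (f has_real_derivative f' y) (at y)"
  shows "\<exists>z. \<bar>z - a\<bar> \<le> \<bar>x - a\<bar> \<and> f x - f a = (x - a) * f' z"
proof (cases x a rule: linorder_cases)
  case less
  then obtain z where "x < z" "z < a" "f a - f x = (a - x) * f' z" using MVT2[of x a f f'] assms by blast
  then show ?thesis by (intro exI[of _ z]) (auto simp: algebra_simps)
next
  case greater
  then obtain z where "a < z" "z < x" "f x - f a = (x - a) * f' z" using MVT2[of a x f f'] assms by blast
  then show ?thesis by (intro exI[of _ z]) auto
qed (intro exI[of _ a], simp)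

lemma C2_T_min_quadratic_bound:
  assumes "C2_T Y" and mn: "\<And>x. Y x0 \<le> Y x"
  shows "\<exists>K>0. \<forall>x. \<bar>x - x0\<bar> \<le> 1 \<longrightarrow> Y x - Y x0 \<le> K * (x - x0)\<^sup>2"
proof -
  obtain Y1 Y2 where d1: "\<And>y. (Y has_real_derivative Y1 y) (at y)"
    and d2: "\<And>y. (Y1 has_real_derivative Y2 y) (at y)" and c2: "continuous_on UNIV Y2"
    using assms(1) unfolding C2_T_def by blast
  have Y10: "Y1 x0 = 0"
    by (rule DERIV_local_min[OF d1, of 1]) (use mn in auto)
  have ca: "continuous_on {x0 - 1..x0 + 1} (\<lambda>y. \<bar>Y2 y\<bar>)"
    by (intro continuous_intros continuous_on_subset[OF c2]) auto
  obtain z0 where z0: "z0 \<in> {x0 - 1..x0 + 1}" "\<And>y. y \<in> {x0 - 1..x0 + 1} \<Longrightarrow> \<bar>Y2 y\<bar> \<le> \<bar>Y2 z0\<bar>"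
    using continuous_attains_sup[OF compact_Icc _ ca] by auto
  define K where "K = \<bar>Y2 z0\<bar> + 1"
  have Kp: "K > 0" unfolding K_def by simp
  have lip: "\<bar>Y1 y\<bar> \<le> K * \<bar>y - x0\<bar>" if y: "\<bar>y - x0\<bar> \<le> 1" for y
  proof -
    obtain z where z: "\<bar>z - x0\<bar> \<le> \<bar>y - x0\<bar>" "Y1 y - Y1 x0 = (y - x0) * Y2 z"
      using MVT_abs[OF d2, where a=x0 and x=y] by blast
    have "z \<in> {x0 - 1..x0 + 1}" using z(1) y by (auto simp: abs_le_iff)
    then have "\<bar>Y2 z\<bar> \<le> K" using z0(2) unfolding K_def by force
    then have "\<bar>Y1 y\<bar> \<le> \<bar>y - x0\<bar> * K" using z(2) Y10 by (simp add: abs_mult mult_left_mono)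
    then show ?thesis by (simp add: mult.commute)
  qed
  show ?thesis
  proof (intro exI[of _ K] conjI Kp allI impI)
    fix x assume x: "\<bar>x - x0\<bar> \<le> 1"
    obtain z where z: "\<bar>z - x0\<bar> \<le> \<bar>x - x0\<bar>" "Y x - Y x0 = (x - x0) * Y1 z"
      using MVT_abs[OF d1, where a=x0 and x=x] by blast
    have "\<bar>Y1 z\<bar> \<le> K * \<bar>z - x0\<bar>" using lip z(1) x by simp
    also have "\<dots> \<le> K * \<bar>x - x0\<bar>" using z(1) Kp by (simp add: mult_left_mono)
    finally have "\<bar>Y x - Y x0\<bar> \<le> \<bar>x - x0\<bar> * (K * \<bar>x - x0\<bar>)" using z(2)
      by (simp add: abs_mult mult_left_mono)
    then show "Y x - Y x0 \<le> K * (x - x0)\<^sup>2" by (simp add: power2_eq_square abs_mult[symmetric] algebra_simps)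
  qed
qed

lemma continuous_on_finite_coordinates:
  fixes g :: "(nat \<Rightarrow> real) \<Rightarrow> real"
  assumes H: "\<And>u0 \<epsilon>. \<epsilon> > 0 \<Longrightarrow> \<exists>\<delta>>0. \<forall>u. (\<forall>i<N. \<bar>u i - u0 i\<bar> < \<delta>) \<longrightarrow> \<bar>g u - g u0\<bar> < \<epsilon>"
  shows "continuous_on UNIV g"
  unfolding continuous_on_topological
proof (intro ballI allI impI)
  fix u0 :: "nat \<Rightarrow> real" and S :: "real set"
  assume S: "open S" "g u0 \<in> S"
  obtain \<epsilon> where e: "\<epsilon> > 0" "ball (g u0) \<epsilon> \<subseteq> S" using S open_contains_ball by blast
  obtain \<delta> where d: "\<delta> > 0" "\<And>u. (\<forall>i<N. \<bar>u i - u0 i\<bar> < \<delta>) \<Longrightarrow> \<bar>g u - g u0\<bar> < \<epsilon>"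
    using H[OF e(1)] by blast
  define A where "A = (\<Inter>i\<in>{..<N}. (\<lambda>u. u i) -` {u0 i - \<delta> <..< u0 i + \<delta>})"
  have "open A" unfolding A_def
    by (intro open_INT finite_lessThan ballI open_vimage open_greaterThanLessThan continuous_on_product_coordinates)
  moreover have "u0 \<in> A" unfolding A_def using d(1) by auto
  moreover have "g y \<in> S" if "y \<in> A" for y
  proof -
    have "\<forall>i<N. \<bar>y i - u0 i\<bar> < \<delta>"
    proof (intro allI impI)
      fix i assume "i < N"
      then have "u0 i - \<delta> < y i \<and> y i < u0 i + \<delta>" using that unfolding A_def by auto
      then show "\<bar>y i - u0 i\<bar> < \<delta>" by (simp add: abs_less_iff)
    qed
    then have "\<bar>g y - g u0\<bar> < \<epsilon>" by (rule d(2))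
    then show ?thesis using e(2) by (auto simp: dist_real_def abs_minus_commute)
  qed
  ultimately show "\<exists>A. open A \<and> u0 \<in> A \<and> (\<forall>y\<in>UNIV. y \<in> A \<longrightarrow> g y \<in> S)" by blast
qed

lemma integral_01_pos:
  fixes g :: "real \<Rightarrow> real"
  assumes cg: "continuous_on {0..1} g" and pos: "\<And>x. x \<in> {0..1} \<Longrightarrow> g x > 0"
  shows "integral {0..1} g > 0"
proof -
  obtain x1 where x1: "x1 \<in> {0..1}" "\<And>y. y \<in> {0..1} \<Longrightarrow> g x1 \<le> g y"
    using continuous_attains_inf[of "{0..1::real}" g] cg by auto
  have "g x1 \<le> integral {0..1} g"
    using has_integral_le[OF has_integral_const_real[where c="g x1" and a=0 and b=1]
        integrable_integral[OF integrable_continuous_interval[OF cg]]] x1 by simp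
  then show ?thesis using pos[OF x1(1)] by simp
qed

lemma abs_integral_01_le:
  fixes g :: "real \<Rightarrow> real"
  assumes cg: "continuous_on {0..1} g" and b: "\<And>x. x \<in> {0..1} \<Longrightarrow> \<bar>g x\<bar> \<le> B"
  shows "\<bar>integral {0..1} g\<bar> \<le> B"
proof -
  have "norm (integral {0..1} g) \<le> integral {0..1} (\<lambda>x::real. B)"
    by (rule integral_norm_bound_integral[OF integrable_continuous_interval[OF cg]
          integrable_continuous_interval[OF continuous_on_const]])
       (use b in auto)
  then show ?thesis by simp
qed

lemma energy_strict_antimono:
  assumes "\<alpha> > 0" "j \<noteq> 0" "m1 > 0" "m2 > 0" "m1 \<noteq> m2"
  shows "(m1 - m2) * (j\<^sup>2 / (2 * m1 powr \<alpha>) - j\<^sup>2 / (2 * m2 powr \<alpha>)) < (0::real)"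
proof (cases "m1 < m2")
  case True
  then have "j\<^sup>2 / (2 * m2 powr \<alpha>) < j\<^sup>2 / (2 * m1 powr \<alpha>)"
    using assms by (intro divide_strict_left_mono mult_strict_left_mono powr_less_mono2) auto
  then show ?thesis using True by (simp add: mult_neg_pos)
next
  case False
  then have "m2 < m1" using assms(5) by simp
  then have "j\<^sup>2 / (2 * m1 powr \<alpha>) < j\<^sup>2 / (2 * m2 powr \<alpha>)"
    using assms by (intro divide_strict_left_mono mult_strict_left_mono powr_less_mono2) auto
  then show ?thesis using \<open>m2 < m1\<close> by (simp add: mult_pos_neg)
qed

lemma continuous_nonpos_integral_01_nonneg_eq_0:
  fixes g :: "real \<Rightarrow> real"
  assumes cg: "continuous_on {0..1} g" and le: "\<And>x. g x \<le> 0" and int: "0 \<le> integral {0..1} g"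
    and x: "x \<in> {0..1}"
  shows "g x = 0"
proof -
  have hg: "(g has_integral integral {0..1} g) {0..1}"
    by (rule integrable_integral[OF integrable_continuous_interval[OF cg]])
  have "integral {0..1} g \<le> 0" using has_integral_le[OF hg has_integral_0] le by blast
  then have "((\<lambda>x. - g x) has_integral 0) (cbox 0 1)" using int has_integral_neg[OF hg] by simp
  from has_integral_0_cbox_imp_0[OF _ _ this, of x] x le show ?thesis
    by (auto intro!: continuous_intros cg)
qed

lemma abs_integral_01_diff_mult_le:
  fixes f g e :: "real \<Rightarrow> real"
  assumes cf: "continuous_on {0..1} f" and cg: "continuous_on {0..1} g" and ce: "continuous_on {0..1} e"
    and fg: "\<And>x. x \<in> {0..1} \<Longrightarrow> \<bar>f x - g x\<bar> \<le> B" and eb: "\<And>x. x \<in> {0..1} \<Longrightarrow> \<bar>e x\<bar> \<le> 1"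
  shows "\<bar>integral {0..1} (\<lambda>x. f x * e x) - integral {0..1} (\<lambda>x. g x * e x)\<bar> \<le> B"
proof -
  have "integral {0..1} (\<lambda>x. f x * e x - g x * e x)
      = integral {0..1} (\<lambda>x. f x * e x) - integral {0..1} (\<lambda>x. g x * e x)"
    by (intro integral_diff integrable_continuous_interval continuous_intros cf cg ce)
  moreover have "\<bar>integral {0..1} (\<lambda>x. f x * e x - g x * e x)\<bar> \<le> B"
  proof (rule abs_integral_01_le)
    show "continuous_on {0..1} (\<lambda>x. f x * e x - g x * e x)" by (intro continuous_intros cf cg ce)
    fix x :: real assume x: "x \<in> {0..1}"
    have "\<bar>f x - g x\<bar> * \<bar>e x\<bar> \<le> B * 1"
      using fg[OF x] eb[OF x] by (intro mult_mono) auto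
    then show "\<bar>f x * e x - g x * e x\<bar> \<le> B" by (simp add: abs_mult left_diff_distrib[symmetric])
  qed
  ultimately show ?thesis by simp
qed

lemma has_integral_inverse_abs_linear_right:
  fixes C \<sigma> \<kappa> r x0 :: real
  assumes "\<sigma> > 0" "\<kappa> > 0" "r \<ge> 0"
  shows "((\<lambda>x. C / (\<sigma> + \<kappa> * \<bar>x - x0\<bar>)) has_integral C / \<kappa> * (ln (\<sigma> + \<kappa> * r) - ln \<sigma>)) {x0..x0 + r}"
proof -
  define F where "F x = C / \<kappa> * ln (\<sigma> + \<kappa> * (x - x0))" for x
  have I: "((\<lambda>x. C / (\<sigma> + \<kappa> * (x - x0))) has_integral F (x0 + r) - F x0) {x0..x0 + r}"
  proof (rule fundamental_theorem_of_calculus[where f=F])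
    show "x0 \<le> x0 + r" using assms by simp
    fix x assume x: "x \<in> {x0..x0 + r}"
    have pos: "\<sigma> + \<kappa> * (x - x0) > 0" using x assms by (auto intro!: add_pos_nonneg)
    have "((\<lambda>x. \<sigma> + \<kappa> * (x - x0)) has_real_derivative \<kappa>) (at x)"
      by (auto intro!: derivative_eq_intros)
    from DERIV_cmult[OF DERIV_chain2[OF DERIV_ln_divide[OF pos] this], of "C / \<kappa>"]
    have "(F has_real_derivative C / (\<sigma> + \<kappa> * (x - x0))) (at x)"
      using assms unfolding F_def[abs_def] by simp
    then show "(F has_vector_derivative C / (\<sigma> + \<kappa> * (x - x0))) (at x within {x0..x0 + r})"
      by (simp add: has_real_derivative_iff_has_vector_derivative[symmetric] has_field_derivative_at_within)
  qed
  have V: "F (x0 + r) - F x0 = C / \<kappa> * (ln (\<sigma> + \<kappa> * r) - ln \<sigma>)"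
    unfolding F_def by (simp add: right_diff_distrib)
  show ?thesis using I unfolding V by (rule has_integral_eq[rotated]) auto
qed

lemma has_integral_inverse_abs_linear_left:
  fixes C \<sigma> \<kappa> r x0 :: real
  assumes "\<sigma> > 0" "\<kappa> > 0" "r \<ge> 0"
  shows "((\<lambda>x. C / (\<sigma> + \<kappa> * \<bar>x - x0\<bar>)) has_integral C / \<kappa> * (ln (\<sigma> + \<kappa> * r) - ln \<sigma>)) {x0 - r..x0}"
proof -
  have "((\<lambda>x. C / (\<sigma> + \<kappa> * \<bar>x - (- x0)\<bar>)) has_integral C / \<kappa> * (ln (\<sigma> + \<kappa> * r) - ln \<sigma>)) {- x0..- (x0 - r)}"
    using has_integral_inverse_abs_linear_right[OF assms, of C "- x0"] by simp
  also have "(\<lambda>x. C / (\<sigma> + \<kappa> * \<bar>x - (- x0)\<bar>)) = (\<lambda>x. C / (\<sigma> + \<kappa> * \<bar>- x - x0\<bar>))"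
  proof (rule ext)
    fix x
    have "\<bar>x - (- x0)\<bar> = \<bar>- x - x0\<bar>" using abs_minus_cancel[of "x + x0"] by simp
    then show "C / (\<sigma> + \<kappa> * \<bar>x - (- x0)\<bar>) = C / (\<sigma> + \<kappa> * \<bar>- x - x0\<bar>)" by (simp only:)
  qed
  finally show ?thesis
    using has_integral_reflect_real[where f="\<lambda>x. C / (\<sigma> + \<kappa> * \<bar>x - x0\<bar>)" and a="x0 - r" and b=x0]
    by simp
qed

lemma has_integral_inverse_abs_linear_in_01:
  fixes C \<sigma> \<kappa> r x0 :: real
  assumes "\<sigma> > 0" "\<kappa> > 0" "0 \<le> r" "r \<le> 1/2" "x0 \<in> {0..1}"
  obtains a b where "{a..b} \<subseteq> {0..1}" "\<And>x. x \<in> {a..b} \<Longrightarrow> \<bar>x - x0\<bar> \<le> r"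
    "((\<lambda>x. C / (\<sigma> + \<kappa> * \<bar>x - x0\<bar>)) has_integral C / \<kappa> * (ln (\<sigma> + \<kappa> * r) - ln \<sigma>)) {a..b}"
proof (cases "x0 \<le> 1/2")
  case True
  then show ?thesis
    using that[of x0 "x0 + r"] has_integral_inverse_abs_linear_right[OF assms(1-3)] assms(4,5) by auto
next
  case False
  then show ?thesis
    using that[of "x0 - r" x0] has_integral_inverse_abs_linear_left[OF assms(1-3)] assms(4,5) by auto
qed

lemma powr_inverse_le_of_sum_squares:
  fixes \<alpha> \<sigma> l y :: real
  assumes "0 < \<alpha>" "\<alpha> \<le> 2" "0 < \<sigma>" "\<sigma> \<le> 1/2" "0 \<le> l" "l \<le> 1/2" "0 \<le> y" "y \<le> l\<^sup>2"
  shows "(\<sigma>\<^sup>2 + y) powr (1 / \<alpha>) \<le> \<sigma> + l"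
proof -
  have s2: "\<sigma>\<^sup>2 \<le> (1/2)\<^sup>2" and l2: "l\<^sup>2 \<le> (1/2)\<^sup>2" using assms by (intro power_mono; simp)+
  have z: "0 < \<sigma>\<^sup>2 + y" "\<sigma>\<^sup>2 + y \<le> 1"
    using assms s2 l2 by (simp_all add: add_pos_nonneg power2_eq_square)
  have "(\<sigma>\<^sup>2 + y) powr (1 / \<alpha>) \<le> (\<sigma>\<^sup>2 + y) powr (1/2)"
    using assms z by (intro powr_mono') (auto simp: field_simps)
  also have "\<dots> = sqrt (\<sigma>\<^sup>2 + y)" using z by (simp add: powr_half_sqrt)
  also have "\<dots> \<le> sqrt (\<sigma>\<^sup>2 + l\<^sup>2)" using assms by simp
  also have "\<dots> \<le> sqrt (\<sigma>\<^sup>2) + sqrt (l\<^sup>2)" by (rule sqrt_add_le_add_sqrt) auto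
  also have "\<dots> = \<sigma> + l" using assms by simp
  finally show ?thesis .
qed


section \<open>The moment equations\<close>

locale trig_mfg =
  fixes \<alpha> j :: real and V :: "real \<Rightarrow> real" and n :: nat and p q :: "nat \<Rightarrow> real"
  assumes alpha_pos: "0 < \<alpha>" and alpha_le_2: "\<alpha> \<le> 2" and j_nonzero: "j \<noteq> 0"
    and C2_V: "C2_T V"
    and pq_pos: "\<forall>k\<in>{1..n}. (p k)\<^sup>2 + (q k)\<^sup>2 > 0"
    and cond_M: "cond_M (trig n p q)"
begin

abbreviation "c \<equiv> c_j \<alpha> j"
abbreviation "G \<equiv> trig n p q"

lemma c_pos: "c > 0"
  using c_j_pos[OF j_nonzero] .

lemma pq_nonzero: "k \<in> {1..n} \<Longrightarrow> (p k)\<^sup>2 + (q k)\<^sup>2 \<noteq> 0"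
  using pq_pos by fastforce

lemma periodic1_V: "periodic1 V"
  using C2_V unfolding C2_T_def by blast

lemma continuous_on_V: "continuous_on S V"
  using C2_V unfolding C2_T_def
  by (metis DERIV_isCont continuous_at_imp_continuous_on)

lemma continuous_on_trig_minus_V: "continuous_on S (\<lambda>x. trig n a b x - V x)"
  by (intro continuous_intros continuous_on_trig continuous_on_V)

definition density :: "(nat \<Rightarrow> real) \<Rightarrow> (nat \<Rightarrow> real) \<Rightarrow> real \<Rightarrow> real" where
  "density a b x = c / (trig n a b x - V x) powr (1 / \<alpha>)"

lemma density_pos:
  assumes "in_C n V a b"
  shows "density a b x > 0"
proof -
  have "trig n a b x - V x > 0" using assms unfolding in_C_def by blast
  then show ?thesis unfolding density_def using c_pos by simp
qed

lemma continuous_on_density: "in_C n V a b \<Longrightarrow> continuous_on S (density a b)"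
  unfolding density_def in_C_def
  by (intro continuous_intros continuous_on_trig_minus_V) (auto simp: less_le)

lemma C0_T_density: "in_C n V a b \<Longrightarrow> C0_T (density a b)"
  using periodic1_trig[of n a b] periodic1_V continuous_on_density
  unfolding C0_T_def periodic1_def density_def by simp

text \<open>The equations (S), once the partial derivatives of \<open>\<Phi>\<^sub>\<alpha>\<close> are computed: mass one and
  prescribed Fourier moments of the density.\<close>

definition moment_conditions :: "(nat \<Rightarrow> real) \<Rightarrow> (nat \<Rightarrow> real) \<Rightarrow> bool" where
  "moment_conditions a b \<longleftrightarrow> integral {0..1} (density a b) = 1 \<and>
     (\<forall>k\<in>{1..n}. integral {0..1} (\<lambda>y. density a b y * cos (2 * pi * real k * y))
               = (p k * a k + q k * b k) / ((p k)\<^sup>2 + (q k)\<^sup>2) \<and>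
       integral {0..1} (\<lambda>y. density a b y * sin (2 * pi * real k * y))
               = (p k * b k - q k * a k) / ((p k)\<^sup>2 + (q k)\<^sup>2))"

lemma moment_conditions_imp_solves_P:
  assumes C: "in_C n V a b" and M: "moment_conditions a b"
  shows "solves_P \<alpha> j V G (density a b) (a 0 - p 0)"
  unfolding solves_P_def
proof (intro conjI allI)
  show "C0_T (density a b)" "0 < density a b x" "integral {0..1} (density a b) = 1" for x
    using C0_T_density[OF C] density_pos[OF C] M unfolding moment_conditions_def by auto
  fix x
  have lhs: "j\<^sup>2 / (2 * density a b x powr \<alpha>) + V x = trig n a b x"
    using C c_j_div_powr_inverse[OF alpha_pos j_nonzero] unfolding density_def in_C_def by simp
  have "integral {0..1} (\<lambda>y. G (x - y) * density a b y)
      = p 0 * 1 + (\<Sum>k=1..n. cos (2 * pi * real k * x) * a k + sin (2 * pi * real k * x) * b k)"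
    unfolding integral_trig_convolution[OF continuous_on_density[OF C]]
      \<open>integral {0..1} (density a b) = 1\<close>
  proof (intro arg_cong[where f="\<lambda>z. p 0 * 1 + z"] sum.cong refl)
    fix k assume k: "k \<in> {1..n}"
    then have Ic: "integral {0..1} (\<lambda>y. density a b y * cos (2 * pi * real k * y))
               = (p k * a k + q k * b k) / ((p k)\<^sup>2 + (q k)\<^sup>2)"
      and Is: "integral {0..1} (\<lambda>y. density a b y * sin (2 * pi * real k * y))
               = (p k * b k - q k * a k) / ((p k)\<^sup>2 + (q k)\<^sup>2)"
      using M unfolding moment_conditions_def by auto
    show "cos (2 * pi * real k * x) * (p k * integral {0..1} (\<lambda>y. density a b y * cos (2 * pi * real k * y))
        - q k * integral {0..1} (\<lambda>y. density a b y * sin (2 * pi * real k * y)))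
      + sin (2 * pi * real k * x) * (p k * integral {0..1} (\<lambda>y. density a b y * sin (2 * pi * real k * y))
        + q k * integral {0..1} (\<lambda>y. density a b y * cos (2 * pi * real k * y)))
      = cos (2 * pi * real k * x) * a k + sin (2 * pi * real k * x) * b k"
      by (simp only: Ic Is rotation_left_inverse[OF pq_nonzero[OF k]])
  qed
  then show "j\<^sup>2 / (2 * density a b x powr \<alpha>) + V x = integral {0..1} (\<lambda>y. G (x - y) * density a b y) + (a 0 - p 0)"
    unfolding lhs trig_def by (simp add: mult.commute)
qed

lemma Phi_partial_a:
  assumes C: "in_C n V a b" and k: "k \<le> n"
  shows "((\<lambda>t. Phi \<alpha> j n V (a(k := t)) b) has_real_derivative
            integral {0..1} (\<lambda>y. density a b y * cos (2 * pi * real k * y))) (at (a k))"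
proof -
  have "(\<lambda>t. Phi \<alpha> j n V (a(k := t)) b) = (\<lambda>t. integral {0..1} (\<lambda>y. phi \<alpha> j
      ((trig n a b y - V y) + (t - a k) * cos (2 * pi * real k * y))))"
    unfolding Phi_def by (simp add: trig_fun_upd_a[OF k] algebra_simps)
  moreover have "((\<lambda>t. integral {0..1} (\<lambda>y. phi \<alpha> j
      ((trig n a b y - V y) + (t - a k) * cos (2 * pi * real k * y)))) has_real_derivative
      integral {0..1} (\<lambda>y. c / (trig n a b y - V y) powr (1 / \<alpha>) * cos (2 * pi * real k * y))) (at (a k))"
    by (rule has_real_derivative_integral_phi[OF alpha_pos])
       (use C in \<open>auto simp: in_C_def intro!: continuous_intros continuous_on_trig_minus_V\<close>)
  ultimately show ?thesis unfolding density_def by simp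
qed

lemma Phi_partial_b:
  assumes C: "in_C n V a b" and k: "k \<in> {1..n}"
  shows "((\<lambda>t. Phi \<alpha> j n V a (b(k := t))) has_real_derivative
            integral {0..1} (\<lambda>y. density a b y * sin (2 * pi * real k * y))) (at (b k))"
proof -
  have "(\<lambda>t. Phi \<alpha> j n V a (b(k := t))) = (\<lambda>t. integral {0..1} (\<lambda>y. phi \<alpha> j
      ((trig n a b y - V y) + (t - b k) * sin (2 * pi * real k * y))))"
    unfolding Phi_def by (simp add: trig_fun_upd_b[OF k] algebra_simps)
  moreover have "((\<lambda>t. integral {0..1} (\<lambda>y. phi \<alpha> j
      ((trig n a b y - V y) + (t - b k) * sin (2 * pi * real k * y)))) has_real_derivative
      integral {0..1} (\<lambda>y. c / (trig n a b y - V y) powr (1 / \<alpha>) * sin (2 * pi * real k * y))) (at (b k))"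
    by (rule has_real_derivative_integral_phi[OF alpha_pos])
       (use C in \<open>auto simp: in_C_def intro!: continuous_intros continuous_on_trig_minus_V\<close>)
  ultimately show ?thesis unfolding density_def by simp
qed

lemma system_S_iff_moment_conditions:
  assumes C: "in_C n V a b"
  shows "system_S \<alpha> j n V p q a b \<longleftrightarrow> moment_conditions a b"
proof -
  have iff: "(f has_real_derivative E) (at x) \<longleftrightarrow> D = E" if "(f has_real_derivative D) (at x)" for f D E x
    using that DERIV_unique by blast
  have "((\<lambda>t. Phi \<alpha> j n V (a(0 := t)) b) has_real_derivative E) (at (a 0))
      \<longleftrightarrow> integral {0..1} (density a b) = E" for E
    using iff[OF Phi_partial_a[OF C, of 0]] by simp
  moreover have "((\<lambda>t. Phi \<alpha> j n V (a(k := t)) b) has_real_derivative E) (at (a k))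
      \<longleftrightarrow> integral {0..1} (\<lambda>y. density a b y * cos (2 * pi * real k * y)) = E" if "k \<in> {1..n}" for k E
    using iff[OF Phi_partial_a[OF C]] that by simp
  moreover have "((\<lambda>t. Phi \<alpha> j n V a (b(k := t))) has_real_derivative E) (at (b k))
      \<longleftrightarrow> integral {0..1} (\<lambda>y. density a b y * sin (2 * pi * real k * y)) = E" if "k \<in> {1..n}" for k E
    using iff[OF Phi_partial_b[OF C]] that by simp
  ultimately show ?thesis unfolding system_S_def moment_conditions_def by simp
qed

section \<open>Uniqueness\<close>

lemma solves_P_continuous: "solves_P \<alpha> j V G m H \<Longrightarrow> continuous_on S m"
  unfolding solves_P_def C0_T_def by (auto intro: continuous_on_subset)

lemma solves_P_monotonicity_inequality:
  assumes s1: "solves_P \<alpha> j V G m1 H1" and s2: "solves_P \<alpha> j V G m2 H2"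
  shows "0 \<le> integral {0..1} (\<lambda>x. (m1 x - m2 x) * (j\<^sup>2 / (2 * m1 x powr \<alpha>) - j\<^sup>2 / (2 * m2 x powr \<alpha>)))"
proof -
  from s1 s2 have I: "integral {0..1} m1 = 1" "integral {0..1} m2 = 1"
    and e1: "\<And>x. j\<^sup>2 / (2 * m1 x powr \<alpha>) = integral {0..1} (\<lambda>y. G (x - y) * m1 y) + H1 - V x"
    and e2: "\<And>x. j\<^sup>2 / (2 * m2 x powr \<alpha>) = integral {0..1} (\<lambda>y. G (x - y) * m2 y) + H2 - V x"
    unfolding solves_P_def by (auto simp: algebra_simps)
  note cm = solves_P_continuous[OF s1] solves_P_continuous[OF s2]
  define f where "f x = m1 x - m2 x" for x
  have cf: "continuous_on S f" for S unfolding f_def by (intro continuous_intros cm)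
  have "C0_T f" using s1 s2 cf unfolding solves_P_def C0_T_def f_def periodic1_def by auto
  then have "0 \<le> integral {0..1} (\<lambda>x. integral {0..1} (\<lambda>y. G (x - y) * f x * f y))"
    using cond_M unfolding cond_M_def by blast
  also have "\<dots> = integral {0..1} (\<lambda>x. f x * (j\<^sup>2 / (2 * m1 x powr \<alpha>) - j\<^sup>2 / (2 * m2 x powr \<alpha>))
      + (H2 - H1) * f x)"
  proof (rule integral_cong)
    fix x
    have "(\<lambda>y. G (x - y) * m1 y) integrable_on {0..1}" "(\<lambda>y. G (x - y) * m2 y) integrable_on {0..1}"
      by (intro integrable_continuous_interval continuous_intros continuous_on_trig_shift cm)+
    then have "integral {0..1} (\<lambda>y. f x * (G (x - y) * m1 y - G (x - y) * m2 y))
        = f x * (integral {0..1} (\<lambda>y. G (x - y) * m1 y) - integral {0..1} (\<lambda>y. G (x - y) * m2 y))"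
      by (simp add: integral_diff)
    then show "integral {0..1} (\<lambda>y. G (x - y) * f x * f y)
        = f x * (j\<^sup>2 / (2 * m1 x powr \<alpha>) - j\<^sup>2 / (2 * m2 x powr \<alpha>)) + (H2 - H1) * f x"
      unfolding e1 e2 f_def by (simp add: algebra_simps)
  qed
  also have "\<dots> = integral {0..1} (\<lambda>x. f x * (j\<^sup>2 / (2 * m1 x powr \<alpha>) - j\<^sup>2 / (2 * m2 x powr \<alpha>)))"
  proof -
    have "integral {0..1} f = 0"
      unfolding f_def using I integral_diff[OF integrable_continuous_interval[OF cm(1)]
          integrable_continuous_interval[OF cm(2)]] by simp
    moreover have "continuous_on {0..1} (\<lambda>x. f x * (j\<^sup>2 / (2 * m1 x powr \<alpha>) - j\<^sup>2 / (2 * m2 x powr \<alpha>)))"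
      using s1 s2 unfolding solves_P_def by (intro continuous_intros cf cm) (auto simp: less_le)
    ultimately show ?thesis
      by (simp add: integral_add integrable_continuous_interval continuous_intros cf)
  qed
  finally show ?thesis unfolding f_def .
qed

lemma solves_P_unique:
  assumes s1: "solves_P \<alpha> j V G m1 H1" and s2: "solves_P \<alpha> j V G m2 H2"
  shows "m1 = m2 \<and> H1 = H2"
proof -
  have pos: "m1 x > 0" "m2 x > 0" for x using s1 s2 unfolding solves_P_def by auto
  define g where "g = (\<lambda>x. (m1 x - m2 x) * (j\<^sup>2 / (2 * m1 x powr \<alpha>) - j\<^sup>2 / (2 * m2 x powr \<alpha>)))"
  have g_nonpos: "g x \<le> 0" for x
    using energy_strict_antimono[OF alpha_pos j_nonzero pos] unfolding g_def
    by (cases "m1 x = m2 x") (auto intro: less_imp_le)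
  have cg: "continuous_on {0..1} g"
    unfolding g_def using pos
    by (intro continuous_intros solves_P_continuous[OF s1] solves_P_continuous[OF s2]) (auto simp: less_le)
  have "m1 x = m2 x" if "x \<in> {0..1}" for x
    using continuous_nonpos_integral_01_nonneg_eq_0[OF cg g_nonpos
        solves_P_monotonicity_inequality[OF s1 s2, folded g_def] that]
      energy_strict_antimono[OF alpha_pos j_nonzero pos, of x x]
    unfolding g_def by fastforce
  moreover have "periodic1 m1" "periodic1 m2" using s1 s2 unfolding solves_P_def C0_T_def by auto
  ultimately have m: "m1 = m2" using periodic1_frac frac_in_01 by (metis ext)
  from s1 s2 have "j\<^sup>2 / (2 * m1 0 powr \<alpha>) + V 0 = integral {0..1} (\<lambda>y. G (0 - y) * m1 y) + H1"
    "j\<^sup>2 / (2 * m1 0 powr \<alpha>) + V 0 = integral {0..1} (\<lambda>y. G (0 - y) * m1 y) + H2"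
    unfolding solves_P_def m by blast+
  with m show ?thesis by simp
qed

section \<open>Existence\<close>

text \<open>A vector \<open>u\<close> of target Fourier moments stores the cosine moment of mode \<open>k\<close> at index
  \<open>k - 1\<close> and the sine moment at index \<open>n + k - 1\<close>; only the indices below \<open>2n\<close> matter.\<close>

definition conv_a :: "(nat \<Rightarrow> real) \<Rightarrow> nat \<Rightarrow> real" where
  "conv_a u k = p k * u (k - 1) - q k * u (n + k - 1)"

definition conv_b :: "(nat \<Rightarrow> real) \<Rightarrow> nat \<Rightarrow> real" where
  "conv_b u k = q k * u (k - 1) + p k * u (n + k - 1)"

definition coeffs_a :: "(nat \<Rightarrow> real) \<Rightarrow> real \<Rightarrow> nat \<Rightarrow> real" where
  "coeffs_a u t = (\<lambda>k. if k = 0 then t else conv_a u k)"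

definition profile :: "(nat \<Rightarrow> real) \<Rightarrow> real \<Rightarrow> real" where
  "profile u x = trig n (coeffs_a u 0) (conv_b u) x - V x"

definition admissible :: "(nat \<Rightarrow> real) \<Rightarrow> real \<Rightarrow> bool" where
  "admissible u t \<longleftrightarrow> (\<forall>x. t + profile u x > 0)"

definition moment :: "(real \<Rightarrow> real) \<Rightarrow> (nat \<Rightarrow> real) \<Rightarrow> real \<Rightarrow> real" where
  "moment e u t = integral {0..1} (\<lambda>x. c / (t + profile u x) powr (1 / \<alpha>) * e x)"

abbreviation mass :: "(nat \<Rightarrow> real) \<Rightarrow> real \<Rightarrow> real" where
  "mass u t \<equiv> moment (\<lambda>x. 1) u t"

lemma trig_coeffs_a: "trig n (coeffs_a u t) (conv_b u) x - V x = t + profile u x"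
proof -
  have "(\<Sum>k = 1..n. coeffs_a u t k * cos (2 * pi * real k * x) + conv_b u k * sin (2 * pi * real k * x))
      = (\<Sum>k = 1..n. coeffs_a u 0 k * cos (2 * pi * real k * x) + conv_b u k * sin (2 * pi * real k * x))"
    by (rule sum.cong) (auto simp: coeffs_a_def)
  then show ?thesis unfolding profile_def trig_def by (simp add: coeffs_a_def)
qed

lemma admissible_iff_in_C: "admissible u t \<longleftrightarrow> in_C n V (coeffs_a u t) (conv_b u)"
  unfolding admissible_def in_C_def using trig_coeffs_a by simp

lemma density_coeffs_a: "density (coeffs_a u t) (conv_b u) x = c / (t + profile u x) powr (1 / \<alpha>)"
  unfolding density_def trig_coeffs_a ..

lemma continuous_on_profile: "continuous_on S (profile u)"
  unfolding profile_def by (rule continuous_on_trig_minus_V)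

lemma C2_T_profile: "C2_T (profile u)"
  unfolding profile_def[abs_def] by (intro C2_T_diff C2_T_trig C2_V)

lemma periodic1_profile: "periodic1 (profile u)"
  using C2_T_profile unfolding C2_T_def by blast

lemma admissible_iff_01: "admissible u t \<longleftrightarrow> (\<forall>x\<in>{0..1}. t + profile u x > 0)"
proof
  assume H: "\<forall>x\<in>{0..1}. t + profile u x > 0"
  show "admissible u t" unfolding admissible_def
  proof
    fix x
    have "t + profile u (frac x) > 0" using H frac_in_01 by blast
    then show "t + profile u x > 0" by (simp add: periodic1_frac[OF periodic1_profile])
  qed
qed (simp add: admissible_def)

lemma admissible_mono: "admissible u t \<Longrightarrow> t \<le> t' \<Longrightarrow> admissible u t'"
  unfolding admissible_def by (meson add_le_cancel_right less_le_trans)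

lemma continuous_on_c_div_powr:
  "(\<And>x. x \<in> S \<Longrightarrow> w x > 0) \<Longrightarrow> continuous_on S w \<Longrightarrow> continuous_on S e \<Longrightarrow>
   continuous_on S (\<lambda>x. c / w x powr (1 / \<alpha>) * e x)"
  by (intro continuous_intros) (auto simp: less_le)

lemma continuous_on_moment_integrand:
  assumes "admissible u t" "continuous_on S e"
  shows "continuous_on S (\<lambda>x. c / (t + profile u x) powr (1 / \<alpha>) * e x)"
proof (rule continuous_on_c_div_powr)
  show "continuous_on S (\<lambda>x. t + profile u x)" by (intro continuous_intros continuous_on_profile)
qed (use assms in \<open>auto simp: admissible_def\<close>)

lemma profile_dist_le:
  assumes d: "\<And>i. i < 2 * n \<Longrightarrow> \<bar>u i - u0 i\<bar> \<le> d"
  shows "\<bar>profile u x - profile u0 x\<bar> \<le> (\<Sum>k=1..n. 2 * (\<bar>p k\<bar> + \<bar>q k\<bar>)) * d"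
proof -
  have "(\<Sum>k=1..n. \<bar>coeffs_a u 0 k - coeffs_a u0 0 k\<bar> + \<bar>conv_b u k - conv_b u0 k\<bar>)
      = (\<Sum>k=1..n. \<bar>conv_a u k - conv_a u0 k\<bar> + \<bar>conv_b u k - conv_b u0 k\<bar>)" (is "_ = ?S")
    by (rule sum.cong) (auto simp: coeffs_a_def)
  note S = this
  have "\<bar>profile u x - profile u0 x\<bar> = \<bar>trig n (coeffs_a u 0) (conv_b u) x - trig n (coeffs_a u0 0) (conv_b u0) x\<bar>"
    unfolding profile_def by simp
  also have "\<dots> \<le> \<bar>coeffs_a u 0 0 - coeffs_a u0 0 0\<bar>
      + (\<Sum>k=1..n. \<bar>coeffs_a u 0 k - coeffs_a u0 0 k\<bar> + \<bar>conv_b u k - conv_b u0 k\<bar>)"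
    by (rule abs_trig_diff_le)
  also have "\<dots> = (\<Sum>k=1..n. \<bar>conv_a u k - conv_a u0 k\<bar> + \<bar>conv_b u k - conv_b u0 k\<bar>)"
    unfolding S by (simp add: coeffs_a_def)
  also have "\<dots> \<le> (\<Sum>k=1..n. 2 * (\<bar>p k\<bar> + \<bar>q k\<bar>) * d)"
  proof (rule sum_mono)
    fix k assume k: "k \<in> {1..n}"
    have d1: "\<bar>u (k - 1) - u0 (k - 1)\<bar> \<le> d" and d2: "\<bar>u (n + k - 1) - u0 (n + k - 1)\<bar> \<le> d"
      using k by (auto intro: d)
    have "\<bar>conv_a u k - conv_a u0 k\<bar> \<le> \<bar>p k\<bar> * d + \<bar>q k\<bar> * d"
    proof -
      have "\<bar>conv_a u k - conv_a u0 k\<bar> = \<bar>p k * (u (k - 1) - u0 (k - 1)) - q k * (u (n + k - 1) - u0 (n + k - 1))\<bar>"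
        unfolding conv_a_def by (simp add: algebra_simps)
      also have "\<dots> \<le> \<bar>p k\<bar> * \<bar>u (k - 1) - u0 (k - 1)\<bar> + \<bar>q k\<bar> * \<bar>u (n + k - 1) - u0 (n + k - 1)\<bar>"
        by (simp add: abs_mult[symmetric] abs_triangle_ineq4)
      also have "\<dots> \<le> \<bar>p k\<bar> * d + \<bar>q k\<bar> * d" by (intro add_mono mult_left_mono d1 d2) auto
      finally show ?thesis .
    qed
    moreover have "\<bar>conv_b u k - conv_b u0 k\<bar> \<le> \<bar>q k\<bar> * d + \<bar>p k\<bar> * d"
    proof -
      have "\<bar>conv_b u k - conv_b u0 k\<bar> = \<bar>q k * (u (k - 1) - u0 (k - 1)) + p k * (u (n + k - 1) - u0 (n + k - 1))\<bar>"
        unfolding conv_b_def by (simp add: algebra_simps)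
      also have "\<dots> \<le> \<bar>q k\<bar> * \<bar>u (k - 1) - u0 (k - 1)\<bar> + \<bar>p k\<bar> * \<bar>u (n + k - 1) - u0 (n + k - 1)\<bar>"
        by (simp add: abs_mult[symmetric] abs_triangle_ineq)
      also have "\<dots> \<le> \<bar>q k\<bar> * d + \<bar>p k\<bar> * d" by (intro add_mono mult_left_mono d1 d2) auto
      finally show ?thesis .
    qed
    ultimately show "\<bar>conv_a u k - conv_a u0 k\<bar> + \<bar>conv_b u k - conv_b u0 k\<bar> \<le> 2 * (\<bar>p k\<bar> + \<bar>q k\<bar>) * d"
      by (simp add: algebra_simps)
  qed
  also have "\<dots> = (\<Sum>k=1..n. 2 * (\<bar>p k\<bar> + \<bar>q k\<bar>)) * d"
    by (rule sum_distrib_right[symmetric])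
  finally show ?thesis .
qed

lemma integral_c_div_powr_close:
  fixes w0 e :: "real \<Rightarrow> real"
  assumes cw0: "continuous_on {0..1} w0" and pos: "\<And>x. x \<in> {0..1} \<Longrightarrow> w0 x > 0"
    and ce: "continuous_on {0..1} e" and eb: "\<And>x. x \<in> {0..1} \<Longrightarrow> \<bar>e x\<bar> \<le> 1" and ep: "\<epsilon> > 0"
  shows "\<exists>\<delta>>0. \<forall>w. continuous_on {0..1} w \<longrightarrow> (\<forall>x\<in>{0..1}. \<bar>w x - w0 x\<bar> \<le> \<delta>) \<longrightarrow>
     (\<forall>x\<in>{0..1}. w x > 0) \<and>
     \<bar>integral {0..1} (\<lambda>x. c / w x powr (1 / \<alpha>) * e x) - integral {0..1} (\<lambda>x. c / w0 x powr (1 / \<alpha>) * e x)\<bar> < \<epsilon>"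
proof -
  obtain x1 where x1: "x1 \<in> {0..1}" "\<And>y. y \<in> {0..1} \<Longrightarrow> w0 x1 \<le> w0 y"
    using continuous_attains_inf[of "{0..1::real}" w0] cw0 by auto
  obtain x2 where x2: "x2 \<in> {0..1}" "\<And>y. y \<in> {0..1} \<Longrightarrow> w0 y \<le> w0 x2"
    using continuous_attains_sup[of "{0..1::real}" w0] cw0 by auto
  define \<mu> where "\<mu> = w0 x1"
  have mu: "\<mu> > 0" unfolding \<mu>_def using pos[OF x1(1)] .
  define K where "K = {\<mu>/2 .. w0 x2 + \<mu>}"
  have "uniformly_continuous_on K (\<lambda>s. c / s powr (1 / \<alpha>))"
    using mu unfolding K_def by (intro compact_uniformly_continuous continuous_intros) auto
  then obtain d where d: "d > 0" and dK: "\<And>s s'. s \<in> K \<Longrightarrow> s' \<in> K \<Longrightarrow> dist s' s < d \<Longrightarrow>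
      dist (c / s' powr (1 / \<alpha>)) (c / s powr (1 / \<alpha>)) < \<epsilon>/2"
    unfolding uniformly_continuous_on_def using ep by (meson half_gt_zero)
  show ?thesis
  proof (intro exI[of _ "min (\<mu>/2) (d/2)"] conjI allI impI)
    show "min (\<mu>/2) (d/2) > 0" using mu d by simp
    fix w assume cw: "continuous_on {0..1} w" and cl: "\<forall>x\<in>{0..1}. \<bar>w x - w0 x\<bar> \<le> min (\<mu>/2) (d/2)"
    have wK: "w x \<in> K" "w0 x \<in> K" "dist (w x) (w0 x) < d" if x: "x \<in> {0..1}" for x
    proof -
      have "\<mu> \<le> w0 x" "w0 x \<le> w0 x2" using x1(2)[OF x] x2(2)[OF x] unfolding \<mu>_def by auto
      moreover have h: "\<bar>w x - w0 x\<bar> \<le> \<mu>/2" "\<bar>w x - w0 x\<bar> \<le> d/2" using cl x by auto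
      moreover have "w x - w0 x \<le> \<mu>/2" "w0 x - w x \<le> \<mu>/2" using h(1) by linarith+
      ultimately show "w x \<in> K" "w0 x \<in> K" "dist (w x) (w0 x) < d"
        unfolding K_def dist_real_def using mu d by (simp_all only: atLeastAtMost_iff) linarith+
    qed
    have wpos: "w x > 0" if "x \<in> {0..1}" for x using wK(1)[OF that] mu unfolding K_def by auto
    then show "\<forall>x\<in>{0..1}. 0 < w x" by blast
    have "continuous_on {0..1} (\<lambda>x. c / w x powr (1 / \<alpha>))" "continuous_on {0..1} (\<lambda>x. c / w0 x powr (1 / \<alpha>))"
      using wpos pos by (intro continuous_intros cw cw0; force)+
    moreover have "\<bar>c / w x powr (1 / \<alpha>) - c / w0 x powr (1 / \<alpha>)\<bar> \<le> \<epsilon>/2" if x: "x \<in> {0..1}" for x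
      using dK[OF wK(2,1,3)[OF x]] by (simp add: dist_real_def)
    ultimately have "\<bar>integral {0..1} (\<lambda>x. c / w x powr (1 / \<alpha>) * e x)
        - integral {0..1} (\<lambda>x. c / w0 x powr (1 / \<alpha>) * e x)\<bar> \<le> \<epsilon>/2"
      by (rule abs_integral_01_diff_mult_le[OF _ _ ce _ eb])
    then show "\<bar>integral {0..1} (\<lambda>x. c / w x powr (1 / \<alpha>) * e x)
        - integral {0..1} (\<lambda>x. c / w0 x powr (1 / \<alpha>) * e x)\<bar> < \<epsilon>"
      using ep by simp
  qed
qed

lemma moment_close:
  assumes g0: "admissible u0 t0" and ce: "continuous_on {0..1} e" and eb: "\<And>x. x \<in> {0..1} \<Longrightarrow> \<bar>e x\<bar> \<le> 1"
    and ep: "\<epsilon> > 0"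
  shows "\<exists>\<delta>>0. \<forall>u t. (\<forall>i<2*n. \<bar>u i - u0 i\<bar> < \<delta>) \<longrightarrow> \<bar>t - t0\<bar> < \<delta> \<longrightarrow>
     admissible u t \<and> \<bar>moment e u t - moment e u0 t0\<bar> < \<epsilon>"
proof -
  have cw0: "continuous_on {0..1} (\<lambda>x. t0 + profile u0 x)" by (intro continuous_intros continuous_on_profile)
  have pos: "\<And>x. x \<in> {0..1} \<Longrightarrow> t0 + profile u0 x > 0" using g0 unfolding admissible_def by blast
  obtain \<delta>0 where d0: "\<delta>0 > 0" and H: "\<And>w. continuous_on {0..1} w \<Longrightarrow> (\<forall>x\<in>{0..1}. \<bar>w x - (t0 + profile u0 x)\<bar> \<le> \<delta>0) \<Longrightarrow>
     (\<forall>x\<in>{0..1}. w x > 0) \<and>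
     \<bar>integral {0..1} (\<lambda>x. c / w x powr (1 / \<alpha>) * e x) - integral {0..1} (\<lambda>x. c / (t0 + profile u0 x) powr (1 / \<alpha>) * e x)\<bar> < \<epsilon>"
    using integral_c_div_powr_close[OF cw0 pos ce eb ep] by blast
  define L where "L = (\<Sum>k=1..n. 2 * (\<bar>p k\<bar> + \<bar>q k\<bar>))"
  have L: "L \<ge> 0" unfolding L_def by (intro sum_nonneg) simp
  define \<delta> where "\<delta> = \<delta>0 / (L + 1)"
  have dpos: "\<delta> > 0" unfolding \<delta>_def using d0 L by simp
  show ?thesis
  proof (intro exI[of _ \<delta>] conjI dpos allI impI)
    fix u t assume cu: "\<forall>i<2*n. \<bar>u i - u0 i\<bar> < \<delta>" and ct: "\<bar>t - t0\<bar> < \<delta>"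
    have cl: "\<forall>x\<in>{0..1}. \<bar>(t + profile u x) - (t0 + profile u0 x)\<bar> \<le> \<delta>0"
    proof
      fix x
      have "\<And>i. i < 2 * n \<Longrightarrow> \<bar>u i - u0 i\<bar> \<le> \<delta>" using cu by (simp add: less_imp_le)
      then have "\<bar>profile u x - profile u0 x\<bar> \<le> L * \<delta>"
        unfolding L_def by (rule profile_dist_le)
      then have "\<bar>(t + profile u x) - (t0 + profile u0 x)\<bar> \<le> \<delta> + L * \<delta>" using ct by linarith
      also have "\<dots> = (L + 1) * \<delta>" by (simp add: algebra_simps)
      also have "\<dots> = \<delta>0" unfolding \<delta>_def using L by simp
      finally show "\<bar>(t + profile u x) - (t0 + profile u0 x)\<bar> \<le> \<delta>0" .
    qed
    have cw: "continuous_on {0..1} (\<lambda>x. t + profile u x)"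
      by (intro continuous_intros continuous_on_profile)
    from H[OF cw cl] show "admissible u t" "\<bar>moment e u t - moment e u0 t0\<bar> < \<epsilon>"
      unfolding admissible_iff_01 moment_def by auto
  qed
qed

text \<open>Since \<open>\<alpha> \<le> 2\<close>, the integrand \<open>c / (s + Y) powr (1 / \<alpha>)\<close> dominates
  \<open>c / (\<surd>s + \<kappa> \<bar>x - x\<^sub>0\<bar>)\<close> near a quadratic zero \<open>x\<^sub>0\<close> of \<open>Y\<close>, whose integral grows like
  \<open>ln (1 / \<surd>s)\<close> as \<open>s \<rightarrow> 0\<close>.\<close>

lemma mass_blowup:
  fixes Y :: "real \<Rightarrow> real"
  assumes cY: "continuous_on {0..1} Y" and Y0: "\<And>x. Y x \<ge> 0" and x0: "x0 \<in> {0..1}" and Kp: "K > 0"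
    and quad: "\<And>x. \<bar>x - x0\<bar> \<le> 1 \<Longrightarrow> Y x \<le> K * (x - x0)\<^sup>2"
  shows "\<exists>s>0. integral {0..1} (\<lambda>x. c / (s + Y x) powr (1 / \<alpha>) * 1) > 1"
proof -
  define \<kappa> where "\<kappa> = sqrt K"
  define r where "r = min (1/2) (1 / (2 * \<kappa>))"
  define E where "E = exp (\<kappa> / c + 1)"
  define \<sigma> where "\<sigma> = \<kappa> * r / E"
  have kp: "\<kappa> > 0" and rp: "r > 0" "r \<le> 1/2" unfolding \<kappa>_def r_def using Kp by auto
  have kr: "\<kappa> * r \<le> 1/2"
    using kp mult_left_mono[of r "1 / (2 * \<kappa>)" \<kappa>] unfolding r_def by simp
  have krp: "\<kappa> * r > 0" using kp rp by simp
  have E1: "E \<ge> 1" unfolding E_def using kp c_pos by simp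
  have sp: "\<sigma> > 0" unfolding \<sigma>_def using krp E1 by simp
  have skr: "\<sigma> \<le> \<kappa> * r" unfolding \<sigma>_def using krp E1
    by (simp add: divide_le_eq) (metis mult.right_neutral mult_left_mono less_imp_le)
  have key: "c / \<kappa> * (ln (\<sigma> + \<kappa> * r) - ln \<sigma>) > 1"
  proof -
    have "ln \<sigma> = ln (\<kappa> * r) - (\<kappa> / c + 1)"
      unfolding \<sigma>_def E_def using krp kp rp by (simp add: ln_div)
    then have "c / \<kappa> * (ln (\<kappa> * r) - ln \<sigma>) = 1 + c / \<kappa>"
      using c_pos kp by (simp add: field_simps)
    moreover have "ln (\<kappa> * r) \<le> ln (\<sigma> + \<kappa> * r)" using sp krp by (subst ln_le_cancel_iff) auto
    ultimately show ?thesis using c_pos kp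
      by (smt (verit) divide_pos_pos mult_left_mono)
  qed
  define f where "f x = c / (\<sigma>\<^sup>2 + Y x) powr (1 / \<alpha>) * 1" for x
  have cf: "continuous_on S f" if "S \<subseteq> {0..1}" for S
    unfolding f_def using sp Y0
    by (intro continuous_on_c_div_powr continuous_intros continuous_on_subset[OF cY that])
       (auto intro: add_pos_nonneg)
  have fL: "c / (\<sigma> + \<kappa> * \<bar>x - x0\<bar>) \<le> f x" if x: "\<bar>x - x0\<bar> \<le> r" for x
  proof -
    have "Y x \<le> (\<kappa> * \<bar>x - x0\<bar>)\<^sup>2"
      using quad[of x] x rp Kp unfolding \<kappa>_def by (simp add: power_mult_distrib)
    moreover have "\<kappa> * \<bar>x - x0\<bar> \<le> 1/2" using kr x kp by (smt (verit) mult_left_mono)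
    ultimately have "(\<sigma>\<^sup>2 + Y x) powr (1 / \<alpha>) \<le> \<sigma> + \<kappa> * \<bar>x - x0\<bar>"
      using skr kr sp kp Y0[of x] alpha_pos alpha_le_2 by (intro powr_inverse_le_of_sum_squares) auto
    moreover have "0 < \<sigma>\<^sup>2 + Y x" using sp Y0[of x] by (simp add: add_pos_nonneg)
    ultimately show ?thesis unfolding f_def mult_1_right using c_pos sp kp
      by (intro divide_left_mono) (auto intro!: mult_pos_pos add_pos_nonneg)
  qed
  obtain a b where J: "{a..b} \<subseteq> {0..1}" "\<And>x. x \<in> {a..b} \<Longrightarrow> \<bar>x - x0\<bar> \<le> r"
    and LJ: "((\<lambda>x. c / (\<sigma> + \<kappa> * \<bar>x - x0\<bar>)) has_integral c / \<kappa> * (ln (\<sigma> + \<kappa> * r) - ln \<sigma>)) {a..b}"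
    using has_integral_inverse_abs_linear_in_01[where C=c, OF sp kp less_imp_le[OF rp(1)] rp(2) x0] by blast
  have fJ: "(f has_integral integral {a..b} f) {a..b}"
    using cf[OF J(1)] by (intro integrable_integral integrable_continuous_interval)
  have "c / \<kappa> * (ln (\<sigma> + \<kappa> * r) - ln \<sigma>) \<le> integral {a..b} f"
    by (rule has_integral_le[OF LJ fJ]) (use fL J(2) in blast)
  also have "\<dots> \<le> integral {0..1} f"
    using J(1) cf[OF J(1)] cf[of "{0..1}"] c_pos
    by (intro integral_subset_le) (auto simp: f_def intro: integrable_continuous_interval)
  finally show ?thesis using key sp unfolding f_def by (intro exI[of _ "\<sigma>\<^sup>2"]) auto
qed

lemma mass_gt_1: "\<exists>t. admissible u t \<and> mass u t > 1"
proof -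
  obtain x0 where x0: "x0 \<in> {0..1}" "\<And>x. profile u x0 \<le> profile u x"
    using periodic1_attains_inf[OF periodic1_profile continuous_on_profile] by blast
  obtain K where K: "K > 0" "\<And>x. \<bar>x - x0\<bar> \<le> 1 \<Longrightarrow> profile u x - profile u x0 \<le> K * (x - x0)\<^sup>2"
    using C2_T_min_quadratic_bound[OF C2_T_profile x0(2)] by blast
  have "continuous_on {0..1} (\<lambda>x. profile u x - profile u x0)"
    by (intro continuous_intros continuous_on_profile)
  moreover have "\<And>x. profile u x - profile u x0 \<ge> 0" using x0(2) by simp
  ultimately obtain s where s: "s > 0"
    "integral {0..1} (\<lambda>x. c / (s + (profile u x - profile u x0)) powr (1 / \<alpha>) * 1) > 1"
    using mass_blowup[OF _ _ x0(1) K] by blast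
  have "admissible u (s - profile u x0)"
    unfolding admissible_def using s(1) x0(2) by (smt (verit))
  moreover have "mass u (s - profile u x0) = integral {0..1} (\<lambda>x. c / (s + (profile u x - profile u x0)) powr (1 / \<alpha>) * 1)"
    unfolding moment_def by (simp add: algebra_simps)
  ultimately show ?thesis using s(2) by auto
qed

lemma mass_lt_1: "\<exists>t. admissible u t \<and> mass u t < 1"
proof -
  obtain x0 where x0: "\<And>x. profile u x0 \<le> profile u x"
    using periodic1_attains_inf[OF periodic1_profile continuous_on_profile] by blast
  define s where "s = (2 * c) powr \<alpha>"
  have sp: "s > 0" unfolding s_def using c_pos by simp
  have s1: "s powr (1 / \<alpha>) = 2 * c" unfolding s_def using c_pos alpha_pos by (simp add: powr_powr)
  have ge: "s - profile u x0 + profile u x \<ge> s" for x using x0[of x] by simp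
  then have g: "admissible u (s - profile u x0)" unfolding admissible_def using sp by (meson less_le_trans)
  have "\<bar>mass u (s - profile u x0)\<bar> \<le> 1/2"
    unfolding moment_def
  proof (rule abs_integral_01_le[OF continuous_on_moment_integrand[OF g continuous_on_const]])
    fix x :: real
    have "s powr (1 / \<alpha>) \<le> (s - profile u x0 + profile u x) powr (1 / \<alpha>)"
      using ge sp alpha_pos by (intro powr_mono2) auto
    then have "c / (s - profile u x0 + profile u x) powr (1 / \<alpha>) \<le> 1/2"
      using c_pos sp unfolding s1 by (simp add: divide_le_eq)
    then show "\<bar>c / (s - profile u x0 + profile u x) powr (1 / \<alpha>) * 1\<bar> \<le> 1/2" using c_pos by simp
  qed
  then show ?thesis using g by (intro exI[of _ "s - profile u x0"]) auto
qed

lemma mass_strict_decreasing: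
  assumes g: "admissible u t" and tt: "t < t'"
  shows "mass u t' < mass u t"
proof -
  have g': "admissible u t'" using admissible_mono[OF g] tt by simp
  have "0 < integral {0..1} (\<lambda>x. c / (t + profile u x) powr (1 / \<alpha>) * 1 - c / (t' + profile u x) powr (1 / \<alpha>) * 1)"
  proof (rule integral_01_pos)
    show "continuous_on {0..1} (\<lambda>x. c / (t + profile u x) powr (1 / \<alpha>) * 1 - c / (t' + profile u x) powr (1 / \<alpha>) * 1)"
      by (intro continuous_intros continuous_on_moment_integrand g g')
    fix x :: real
    have p1: "t + profile u x > 0" using g unfolding admissible_def by blast
    have "(t + profile u x) powr (1 / \<alpha>) < (t' + profile u x) powr (1 / \<alpha>)"
      using p1 tt alpha_pos by (intro powr_less_mono2) auto
    then have "c / (t' + profile u x) powr (1 / \<alpha>) < c / (t + profile u x) powr (1 / \<alpha>)"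
      using c_pos p1 by (intro divide_strict_left_mono) (auto intro!: mult_pos_pos)
    then show "0 < c / (t + profile u x) powr (1 / \<alpha>) * 1 - c / (t' + profile u x) powr (1 / \<alpha>) * 1" by simp
  qed
  also have "\<dots> = mass u t - mass u t'"
    unfolding moment_def
    by (intro integral_diff integrable_continuous_interval continuous_on_moment_integrand g g' continuous_on_const)
  finally show ?thesis by simp
qed

lemma continuous_on_mass:
  assumes "\<And>t. t \<in> {t1..t2} \<Longrightarrow> admissible u t"
  shows "continuous_on {t1..t2} (mass u)"
  unfolding continuous_on_iff
proof (intro ballI allI impI)
  fix t e :: real assume t: "t \<in> {t1..t2}" and e: "e > 0"
  have "\<exists>\<delta>>0. \<forall>u' t'. (\<forall>i<2*n. \<bar>u' i - u i\<bar> < \<delta>) \<longrightarrow> \<bar>t' - t\<bar> < \<delta> \<longrightarrow>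
     admissible u' t' \<and> \<bar>mass u' t' - mass u t\<bar> < e"
    by (rule moment_close[OF assms[OF t] continuous_on_const _ e]) simp
  then obtain \<delta> where "\<delta> > 0" "\<And>t'. \<bar>t' - t\<bar> < \<delta> \<Longrightarrow> \<bar>mass u t' - mass u t\<bar> < e"
    by fastforce
  then show "\<exists>d>0. \<forall>x'\<in>{t1..t2}. dist x' t < d \<longrightarrow> dist (mass u x') (mass u t) < e"
    by (intro exI[of _ \<delta>]) (auto simp: dist_real_def)
qed

lemma ex1_mass_eq_1: "\<exists>!t. admissible u t \<and> mass u t = 1"
proof -
  obtain t1 where t1: "admissible u t1" "mass u t1 > 1" using mass_gt_1 by blast
  obtain t2 where t2: "admissible u t2" "mass u t2 < 1" using mass_lt_1 by blast
  have "t1 \<le> t2" using mass_strict_decreasing[OF t2(1), of t1] t1 t2 by force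
  moreover have gi: "admissible u t" if "t \<in> {t1..t2}" for t using admissible_mono[OF t1(1)] that by simp
  ultimately obtain t where t: "t1 \<le> t" "t \<le> t2" "mass u t = 1"
    using IVT2'[of "mass u" t2 1 t1] t1 t2 continuous_on_mass[OF gi] by force
  show ?thesis
  proof (rule ex1I[of _ t])
    show "admissible u t \<and> mass u t = 1" using gi t by auto
    fix t' assume t': "admissible u t' \<and> mass u t' = 1"
    show "t' = t"
      using mass_strict_decreasing[of u t' t] mass_strict_decreasing[of u t t'] t' t gi
      by (cases t' t rule: linorder_cases) auto
  qed
qed

definition mass_level :: "(nat \<Rightarrow> real) \<Rightarrow> real" where
  "mass_level u = (THE t. admissible u t \<and> mass u t = 1)"

lemma mass_level: "admissible u (mass_level u)" "mass u (mass_level u) = 1"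
  using theI'[OF ex1_mass_eq_1[of u]] unfolding mass_level_def by auto

lemma mass_level_between:
  assumes "admissible u t1" "mass u t1 > 1" "admissible u t2" "mass u t2 < 1"
  shows "t1 < mass_level u" "mass_level u < t2"
proof -
  show "t1 < mass_level u"
    using mass_strict_decreasing[OF mass_level(1)[of u], of t1] mass_level(2)[of u] assms(2)
    by (cases "mass_level u" t1 rule: linorder_cases) auto
  show "mass_level u < t2"
    using mass_strict_decreasing[OF assms(3), of "mass_level u"] mass_level(2) assms(4)
    by (cases "mass_level u" t2 rule: linorder_cases) auto
qed

lemma mass_level_bracket:
  assumes "\<epsilon> > 0"
  obtains e where "0 < e" "e \<le> \<epsilon>"
    "admissible u (mass_level u - e)" "mass u (mass_level u - e) > 1"
    "admissible u (mass_level u + e)" "mass u (mass_level u + e) < 1"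
proof -
  define t0 where "t0 = mass_level u"
  obtain x1 where x1: "\<And>x. profile u x1 \<le> profile u x"
    using periodic1_attains_inf[OF periodic1_profile continuous_on_profile] by blast
  have mu: "t0 + profile u x1 > 0" using mass_level(1)[of u] unfolding t0_def admissible_def by blast
  define e where "e = min \<epsilon> ((t0 + profile u x1) / 2)"
  have e: "e > 0" "e \<le> \<epsilon>" using assms mu unfolding e_def by auto
  have lo: "admissible u (t0 - e)" unfolding admissible_def
  proof
    fix x
    have "e \<le> (t0 + profile u x1) / 2" unfolding e_def by (rule min.cobounded2)
    then show "0 < t0 - e + profile u x" using x1[of x] mu by (simp add: field_simps)
  qed
  show ?thesis
  proof (rule that[OF e])
    show "admissible u (mass_level u - e)" "mass u (mass_level u - e) > 1"
      using lo mass_strict_decreasing[OF lo, of t0] mass_level(2)[of u] e unfolding t0_def by simp_all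
    show "admissible u (mass_level u + e)" "mass u (mass_level u + e) < 1"
      using admissible_mono[OF mass_level(1)[of u]] mass_strict_decreasing[OF mass_level(1)[of u]]
        mass_level(2)[of u] e by auto
  qed
qed

lemma mass_close:
  assumes "admissible u0 t" "\<eta> > 0"
  obtains d where "d > 0" "\<And>u. (\<forall>i<2*n. \<bar>u i - u0 i\<bar> < d) \<Longrightarrow>
    admissible u t \<and> \<bar>mass u t - mass u0 t\<bar> < \<eta>"
proof -
  have "\<exists>\<delta>>0. \<forall>u t'. (\<forall>i<2*n. \<bar>u i - u0 i\<bar> < \<delta>) \<longrightarrow> \<bar>t' - t\<bar> < \<delta> \<longrightarrow>
     admissible u t' \<and> \<bar>mass u t' - mass u0 t\<bar> < \<eta>"
    by (rule moment_close[OF assms(1) continuous_on_const _ assms(2)]) simp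
  then obtain \<delta> where "\<delta> > 0" and H: "\<And>u t'. (\<forall>i<2*n. \<bar>u i - u0 i\<bar> < \<delta>) \<Longrightarrow> \<bar>t' - t\<bar> < \<delta> \<Longrightarrow>
     admissible u t' \<and> \<bar>mass u t' - mass u0 t\<bar> < \<eta>"
    by blast
  show ?thesis by (rule that[OF \<open>\<delta> > 0\<close>]) (use H[of _ t] \<open>\<delta> > 0\<close> in auto)
qed

lemma mass_level_close:
  assumes ep: "\<epsilon> > 0"
  shows "\<exists>\<delta>>0. \<forall>u. (\<forall>i<2*n. \<bar>u i - u0 i\<bar> < \<delta>) \<longrightarrow> \<bar>mass_level u - mass_level u0\<bar> < \<epsilon>"
proof -
  define t0 where "t0 = mass_level u0"
  obtain e where e: "0 < e" "e \<le> \<epsilon>" and lo: "admissible u0 (t0 - e)" "mass u0 (t0 - e) > 1"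
    and hi: "admissible u0 (t0 + e)" "mass u0 (t0 + e) < 1"
    using mass_level_bracket[OF ep, of u0] unfolding t0_def by blast
  define \<eta> where "\<eta> = min (mass u0 (t0 - e) - 1) (1 - mass u0 (t0 + e))"
  have eta: "\<eta> > 0" unfolding \<eta>_def using lo hi by simp
  \<comment> \<open>the strict inequalities at \<open>t0 \<plusminus> e\<close> persist for nearby moment vectors\<close>
  obtain d1 where d1: "d1 > 0" "\<And>u. (\<forall>i<2*n. \<bar>u i - u0 i\<bar> < d1) \<Longrightarrow>
     admissible u (t0 - e) \<and> \<bar>mass u (t0 - e) - mass u0 (t0 - e)\<bar> < \<eta>"
    using mass_close[OF lo(1) eta] by blast
  obtain d2 where d2: "d2 > 0" "\<And>u. (\<forall>i<2*n. \<bar>u i - u0 i\<bar> < d2) \<Longrightarrow>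
     admissible u (t0 + e) \<and> \<bar>mass u (t0 + e) - mass u0 (t0 + e)\<bar> < \<eta>"
    using mass_close[OF hi(1) eta] by blast
  show ?thesis
  proof (intro exI[of _ "min d1 d2"] conjI allI impI)
    show "min d1 d2 > 0" using d1 d2 by simp
    fix u assume u: "\<forall>i<2*n. \<bar>u i - u0 i\<bar> < min d1 d2"
    then have u1: "\<forall>i<2*n. \<bar>u i - u0 i\<bar> < d1" and u2: "\<forall>i<2*n. \<bar>u i - u0 i\<bar> < d2" by auto
    have "\<eta> \<le> mass u0 (t0 - e) - 1" "\<eta> \<le> 1 - mass u0 (t0 + e)" unfolding \<eta>_def by auto
    then have "mass u (t0 - e) > 1" "mass u (t0 + e) < 1"
      using d1(2)[OF u1] d2(2)[OF u2] by (auto simp: abs_less_iff)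
    then have "t0 - e < mass_level u" "mass_level u < t0 + e"
      using mass_level_between[of u "t0 - e" "t0 + e"] d1(2)[OF u1] d2(2)[OF u2] by auto
    then show "\<bar>mass_level u - mass_level u0\<bar> < \<epsilon>" using e unfolding t0_def by auto
  qed
qed

definition mode :: "nat \<Rightarrow> real \<Rightarrow> real" where
  "mode i x = (if i < n then cos (2 * pi * real (i + 1) * x) else sin (2 * pi * real (i - n + 1) * x))"

lemma continuous_on_mode: "continuous_on S (mode i)"
  unfolding mode_def by (cases "i < n") (simp_all add: continuous_intros)

lemma abs_mode_le_1: "\<bar>mode i x\<bar> \<le> 1"
  unfolding mode_def by auto

text \<open>Fixed points of the moment map solve (S).\<close>

definition moment_map :: "(nat \<Rightarrow> real) \<Rightarrow> nat \<Rightarrow> real" where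
  "moment_map u i = (if i < 2 * n then moment (mode i) u (mass_level u) else 0)"

lemma abs_moment_le_mass:
  assumes g: "admissible u t" and ce: "continuous_on {0..1} e" and eb: "\<And>x. \<bar>e x\<bar> \<le> 1"
  shows "\<bar>moment e u t\<bar> \<le> mass u t"
proof -
  have "norm (integral {0..1} (\<lambda>x. c / (t + profile u x) powr (1 / \<alpha>) * e x))
      \<le> integral {0..1} (\<lambda>x. c / (t + profile u x) powr (1 / \<alpha>) * 1)"
  proof (rule integral_norm_bound_integral)
    fix x
    have p: "0 \<le> c / (t + profile u x) powr (1 / \<alpha>)" using c_pos by simp
    have "\<bar>c / (t + profile u x) powr (1 / \<alpha>) * e x\<bar> = c / (t + profile u x) powr (1 / \<alpha>) * \<bar>e x\<bar>"
      unfolding abs_mult using p by (simp only: abs_of_nonneg)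
    also have "\<dots> \<le> c / (t + profile u x) powr (1 / \<alpha>) * 1" by (rule mult_left_mono[OF eb p])
    finally show "norm (c / (t + profile u x) powr (1 / \<alpha>) * e x) \<le> c / (t + profile u x) powr (1 / \<alpha>) * 1"
      by simp
  qed (intro integrable_continuous_interval continuous_on_moment_integrand g ce continuous_on_const)+
  then show ?thesis unfolding moment_def by simp
qed

lemma abs_moment_map_le_1: "\<bar>moment_map u i\<bar> \<le> 1"
  using abs_moment_le_mass[OF mass_level(1) continuous_on_mode abs_mode_le_1] mass_level(2)
  unfolding moment_map_def by auto

lemma continuous_on_moment_map: "continuous_on UNIV (\<lambda>u. moment_map u i)"
proof (cases "i < 2 * n")
  case False
  then show ?thesis unfolding moment_map_def by simp
next
  case True
  show ?thesis
  proof (rule continuous_on_finite_coordinates[where N="2 * n"])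
    fix u0 :: "nat \<Rightarrow> real" and \<epsilon> :: real assume e: "\<epsilon> > 0"
    obtain d1 where d1: "d1 > 0" "\<And>u t. (\<forall>i<2*n. \<bar>u i - u0 i\<bar> < d1) \<Longrightarrow> \<bar>t - mass_level u0\<bar> < d1 \<Longrightarrow>
       \<bar>moment (mode i) u t - moment (mode i) u0 (mass_level u0)\<bar> < \<epsilon>"
      using moment_close[OF mass_level(1) continuous_on_mode abs_mode_le_1 e] by blast
    obtain d2 where d2: "d2 > 0" "\<And>u. (\<forall>i<2*n. \<bar>u i - u0 i\<bar> < d2) \<Longrightarrow> \<bar>mass_level u - mass_level u0\<bar> < d1"
      using mass_level_close[OF d1(1), of u0] by blast
    show "\<exists>\<delta>>0. \<forall>u. (\<forall>i<2 * n. \<bar>u i - u0 i\<bar> < \<delta>) \<longrightarrow> \<bar>moment_map u i - moment_map u0 i\<bar> < \<epsilon>"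
    proof (intro exI[of _ "min d1 d2"] conjI allI impI)
      show "min d1 d2 > 0" using d1 d2 by simp
      fix u assume u: "\<forall>i<2 * n. \<bar>u i - u0 i\<bar> < min d1 d2"
      then have "\<bar>mass_level u - mass_level u0\<bar> < d1" using d2(2) by simp
      then show "\<bar>moment_map u i - moment_map u0 i\<bar> < \<epsilon>"
        using d1(2)[of u "mass_level u"] u True unfolding moment_map_def by simp
    qed
  qed
qed

lemma moment_map_fixpoint: "\<exists>u. moment_map u = u"
proof -
  \<comment> \<open>rescale so that the image lies in the unit ball of the first \<open>2n\<close> coordinates\<close>
  define R where "R = real (2 * n) + 1"
  have R: "R \<ge> 1" unfolding R_def by simp
  define f where "f v i = moment_map (\<lambda>i. R * v i) i / R" for v i
  have scale: "continuous_on UNIV (\<lambda>v::nat\<Rightarrow>real. \<lambda>i. R * v i)"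
    by (intro continuous_on_coordinatewise_then_product continuous_intros continuous_on_product_coordinates)
  have cf: "continuous_on UNIV f" unfolding f_def[abs_def]
    by (intro continuous_on_coordinatewise_then_product continuous_intros
        continuous_on_compose2[OF continuous_on_moment_map scale]) (use R in auto)
  have bnd: "(\<Sum>i<2*n. (f v i)\<^sup>2) \<le> 1" for v
  proof -
    have "(f v i)\<^sup>2 \<le> 1 / R" for i
    proof -
      have h: "\<bar>f v i\<bar> \<le> 1 / R" unfolding f_def using abs_moment_map_le_1 R by (simp add: divide_right_mono)
      have h1: "1 / R \<le> 1" using R by simp
      have "\<bar>f v i\<bar> * \<bar>f v i\<bar> \<le> 1 / R * 1" by (rule mult_mono[OF h order_trans[OF h h1]]) (use R in auto)
      then show ?thesis by (simp add: power2_eq_square abs_mult[symmetric])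
    qed
    then have "(\<Sum>i<2*n. (f v i)\<^sup>2) \<le> (\<Sum>i<2*n. 1 / R)" by (intro sum_mono)
    also have "\<dots> = real (2 * n) / R" by simp
    also have "\<dots> \<le> 1" using R unfolding R_def by simp
    finally show ?thesis .
  qed
  have supp: "f v i = 0" if "2 * n \<le> i" for v i using that unfolding f_def moment_map_def by simp
  obtain v where v: "f v = v" using brouwer_finite_support[OF cf supp bnd] by blast
  have Rnz: "R \<noteq> 0" using R by simp
  have "moment_map (\<lambda>i. R * v i) i = R * v i" for i
    using fun_cong[OF v, of i] Rnz unfolding f_def by (simp add: field_simps)
  then show ?thesis by blast
qed

lemma system_S_solvable: "\<exists>a b. in_C n V a b \<and> system_S \<alpha> j n V p q a b"
proof -
  obtain u where u: "moment_map u = u" using moment_map_fixpoint by blast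
  define a where "a = coeffs_a u (mass_level u)"
  define b where "b = conv_b u"
  have C: "in_C n V a b" unfolding a_def b_def using mass_level(1) admissible_iff_in_C by blast
  have dens: "density a b x = c / (mass_level u + profile u x) powr (1 / \<alpha>)" for x
    unfolding a_def b_def by (rule density_coeffs_a)
  have moment_mode: "integral {0..1} (\<lambda>y. density a b y * mode i y) = u i" if "i < 2 * n" for i
    using fun_cong[OF u, of i] that unfolding moment_map_def moment_def dens by simp
  have "moment_conditions a b"
    unfolding moment_conditions_def
  proof (intro conjI ballI)
    show "integral {0..1} (density a b) = 1"
      using mass_level(2)[of u] unfolding moment_def dens by simp
    fix k assume k: "k \<in> {1..n}"
    have "k - 1 < n" "\<not> n + k - 1 < n" "k - 1 + 1 = k" "n + k - 1 - n + 1 = k" using k by auto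
    then have "mode (k - 1) = (\<lambda>y. cos (2 * pi * real k * y))" "mode (n + k - 1) = (\<lambda>y. sin (2 * pi * real k * y))"
      unfolding mode_def by simp_all
    then have "integral {0..1} (\<lambda>y. density a b y * cos (2 * pi * real k * y)) = u (k - 1)"
      "integral {0..1} (\<lambda>y. density a b y * sin (2 * pi * real k * y)) = u (n + k - 1)"
      using moment_mode[of "k - 1"] moment_mode[of "n + k - 1"] k by auto
    moreover have "a k = p k * u (k - 1) - q k * u (n + k - 1)" "b k = q k * u (k - 1) + p k * u (n + k - 1)"
      using k unfolding a_def b_def coeffs_a_def conv_a_def conv_b_def by auto
    ultimately show "integral {0..1} (\<lambda>y. density a b y * cos (2 * pi * real k * y))
          = (p k * a k + q k * b k) / ((p k)\<^sup>2 + (q k)\<^sup>2)"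
      "integral {0..1} (\<lambda>y. density a b y * sin (2 * pi * real k * y))
          = (p k * b k - q k * a k) / ((p k)\<^sup>2 + (q k)\<^sup>2)"
      using rotation_right_inverse[OF pq_nonzero[OF k]] by simp_all
  qed
  then show ?thesis using C system_S_iff_moment_conditions[OF C] by blast
qed

lemma system_S_unique:
  assumes "in_C n V a b" "system_S \<alpha> j n V p q a b" "in_C n V a' b'" "system_S \<alpha> j n V p q a' b'"
  shows "(\<forall>k\<le>n. a' k = a k) \<and> (\<forall>k\<in>{1..n}. b' k = b k)"
proof -
  have M: "moment_conditions a b" "moment_conditions a' b'"
    using assms system_S_iff_moment_conditions by blast+
  have dens: "density a' b' = density a b" and a0: "a' 0 = a 0"
    using solves_P_unique[OF moment_conditions_imp_solves_P[OF assms(3) M(2)]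
        moment_conditions_imp_solves_P[OF assms(1) M(1)]] by auto
  have ab: "a' k = a k \<and> b' k = b k" if k: "k \<in> {1..n}" for k
  proof -
    have c': "integral {0..1} (\<lambda>y. density a b y * cos (2 * pi * real k * y))
          = (p k * a' k + q k * b' k) / ((p k)\<^sup>2 + (q k)\<^sup>2)"
      and s': "integral {0..1} (\<lambda>y. density a b y * sin (2 * pi * real k * y))
          = (p k * b' k - q k * a' k) / ((p k)\<^sup>2 + (q k)\<^sup>2)"
      using M(2) k unfolding moment_conditions_def dens by blast+
    have c: "integral {0..1} (\<lambda>y. density a b y * cos (2 * pi * real k * y))
          = (p k * a k + q k * b k) / ((p k)\<^sup>2 + (q k)\<^sup>2)"
      and s: "integral {0..1} (\<lambda>y. density a b y * sin (2 * pi * real k * y))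
          = (p k * b k - q k * a k) / ((p k)\<^sup>2 + (q k)\<^sup>2)"
      using M(1) k unfolding moment_conditions_def by blast+
    show ?thesis
      using rotation_inj[OF pq_nonzero[OF k] trans[OF c'[symmetric] c] trans[OF s'[symmetric] s]] by blast
  qed
  show ?thesis
  proof (intro conjI allI impI ballI)
    show "a' k = a k" if "k \<le> n" for k using that a0 ab by (cases "k = 0") auto
    show "b' k = b k" if "k \<in> {1..n}" for k using that ab by blast
  qed
qed

end

theorem theorem1p1:
  fixes \<alpha> j :: real and V :: "real \<Rightarrow> real" and n :: nat and p q :: "nat \<Rightarrow> real"
  assumes "0 < \<alpha>" "\<alpha> \<le> 2" "j \<noteq> 0" "C2_T V"
    and "\<forall>k\<in>{1..n}. (p k)\<^sup>2 + (q k)\<^sup>2 > 0"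
    and "cond_M (trig n p q)" "cond_W (trig n p q)"
  shows "(\<exists>!mH. solves_P \<alpha> j V (trig n p q) (fst mH) (snd mH)) \<and>
    (\<exists>a b. in_C n V a b \<and> system_S \<alpha> j n V p q a b \<and>
       (\<forall>a' b'. in_C n V a' b' \<and> system_S \<alpha> j n V p q a' b' \<longrightarrow>
          (\<forall>k\<le>n. a' k = a k) \<and> (\<forall>k\<in>{1..n}. b' k = b k)) \<and>
       solves_P \<alpha> j V (trig n p q)
         (\<lambda>x. c_j \<alpha> j / (trig n a b x - V x) powr (1 / \<alpha>)) (a 0 - p 0))"
proof -
  interpret trig_mfg \<alpha> j V n p q
    using assms by unfold_locales auto
  obtain a b where C: "in_C n V a b" and S: "system_S \<alpha> j n V p q a b"
    using system_S_solvable by blast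
  have P: "solves_P \<alpha> j V G (density a b) (a 0 - p 0)"
    using moment_conditions_imp_solves_P[OF C] system_S_iff_moment_conditions[OF C] S by blast
  have ex1: "\<exists>!mH. solves_P \<alpha> j V G (fst mH) (snd mH)"
  proof (rule ex1I[of _ "(density a b, a 0 - p 0)"])
    show "solves_P \<alpha> j V G (fst (density a b, a 0 - p 0)) (snd (density a b, a 0 - p 0))" using P by simp
    show "mH = (density a b, a 0 - p 0)" if "solves_P \<alpha> j V G (fst mH) (snd mH)" for mH
      using solves_P_unique[OF that P] by (simp add: prod_eq_iff)
  qed
  have uniq: "\<forall>a' b'. in_C n V a' b' \<and> system_S \<alpha> j n V p q a' b' \<longrightarrow>
      (\<forall>k\<le>n. a' k = a k) \<and> (\<forall>k\<in>{1..n}. b' k = b k)"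
    using system_S_unique[OF C S] by blast
  have P': "solves_P \<alpha> j V G (\<lambda>x. c_j \<alpha> j / (trig n a b x - V x) powr (1 / \<alpha>)) (a 0 - p 0)"
    using P unfolding density_def[abs_def] .
  show ?thesis
    by (intro conjI ex1 exI[of _ a] exI[of _ b] C S uniq P')
qed

end
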